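(* For all $e,f\in\mathrm{Exp}$, if $e\sim f$ then $e\mathrel{\dot\equiv}f$.
   Context: Fix a finite set $T$ of primitive tests, a set $\mathrm{Act}$ of atomic actions, a set $\mathrm{Out}$ of return values, and a semiring $(S,+,\cdot,0,1)$ that is positive ($x+y=0\Rightarrow x=y=0$), refinement (whenever $x+y=z+w$ there exist $s,t,u,v$ with $s+t=x$, $s+u=z$, $u+v=y$, $t+v=w$) and Conway (with ${}^*:S\to S$ satisfying $(a+b)^*=a^*(ba^* )^*$, $(ab)^*=1+a(ba)^*b$). Tests: $b,c\in\mathrm{BExp}::=\mathtt{0}\mid\mathtt{1}\mid t\ (t\in T)\mid\bar b\mid b+c\mid bc$ ($\mathtt 0,\mathtt 1$ false/true, distinct from semiring $0,1$); $\equiv_{BA}$ is Boolean equivalence; $\mathrm{At}$ is the finite set of atoms of the free Boolean algebra on $T$, atoms also regarded as tests; $\alpha\le b$ means $\alpha$ entails $b$. Expressions: $e,f\in\mathrm{Exp}::= p\in\mathrm{Act}\mid b\in\mathrm{BExp}\mid e+_b f\mid e;f\mid e^{(b)}\mid v\in\mathrm{Out}\mid e\oplus_{r,s} f\ (r,s\in S)$; $\odot r:=\mathtt 1\oplus_{r,0}\mathtt 0$. $\mathcal M_\omega(X)$: finitely supported maps $X\to S$, pointwise operations; $\delta_x$ indicator of $x$; $\nu[A]=\sum_{x\in A}\nu(x)$. A wGKAT automaton is $(X,\beta)$ with $\beta:X\to\mathcal M_\omega(\{\mathsf{acc},\mathsf{rej}\}+\mathrm{Out}+\mathrm{Act}\times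 X)^{\mathrm{At}}$. A map $h:X\to Y$ between automata $(X,\beta),(Y,\gamma)$ is a homomorphism if for all $x,\alpha$: $\gamma(h(x))_\alpha(o)=\beta(x)_\alpha(o)$ for $o\in\{\mathsf{acc},\mathsf{rej}\}+\mathrm{Out}$, and $\gamma(h(x))_\alpha(p,y)=\beta(x)_\alpha[\{p\}\times h^{-1}(y)]$. A relation $R\subseteq X\times Y$ is a bisimulation if there is $\rho:R\to\mathcal M_\omega(\{\mathsf{acc},\mathsf{rej}\}+\mathrm{Out}+\mathrm{Act}\times R)^{\mathrm{At}}$ making both projections homomorphisms from $(R,\rho)$; $e\sim f$ means some bisimulation on $(\mathrm{Exp},\partial)$ contains $(e,f)$. The derivative automaton: $\partial(b)_\alpha=\delta_{\mathsf{acc}}$ if $\alpha\le b$, else $\delta_{\mathsf{rej}}$; $\partial(v)_\alpha=\delta_v$; $\partial(p)_\alpha=\delta_{(p,\mathtt 1)}$; $\partial(e+_bf)_\alpha=\partial(e)_\alpha$ if $\alpha\le b$, else $\partial(f)_\alpha$; $\partial(e\oplus_{r,s}f)_\alpha=r\partial(e)_\alpha+s\partial(f)_\alpha$; $\partial(e;f)_\alpha=\sum_x\partial(e)_\alpha(x)c_{\alpha,f}(x)$ with $c_{\alpha,f}(\mathsf{acc})=\partial(f)_\alpha$, $c_{\alpha,f}(x)=\delta_x$ for $x\in\{\mathsf{rej}\}\cup\mathrm{Out}$, $c_{\alpha,f}(p,e')=\delta_{(p,e';f)}$; $\partial(e^{(b)})_\alpha(x)$ is $1$ if $x=\mathsf{acc}$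 and $\alpha\le\bar b$; $\partial(e)_\alpha(\mathsf{acc})^*\partial(e)_\alpha(x)$ if $x\in\{\mathsf{rej}\}\cup\mathrm{Out}$ and $\alpha\le b$; $\partial(e)_\alpha(\mathsf{acc})^*\partial(e)_\alpha(p,e')$ if $x=(p,e';e^{(b)})$ and $\alpha\le b$; $0$ otherwise. $E:\mathrm{Exp}\to S^{\mathrm{At}}$: $E(p)_\alpha=E(v)_\alpha=0$; $E(b)_\alpha=1$ if $\alpha\le b$ else $0$; $E(e\oplus_{r,s}f)_\alpha=rE(e)_\alpha+sE(f)_\alpha$; $E(e+_bf)_\alpha=E(e)_\alpha$ if $\alpha\le b$ else $E(f)_\alpha$; $E(e;f)_\alpha=E(e)_\alpha E(f)_\alpha$; $E(e^{(b)})_\alpha=E(\bar b)_\alpha$. The relation $\equiv$ is the smallest congruence on $\mathrm{Exp}$ (tests taken up to $\equiv_{BA}$; sequencing binds tighter than $\oplus$, $\odot$ binds tightest) containing, for all $e,f,g\in\mathrm{Exp}$, tests $b,c$, $v\in\mathrm{Out}$, $r,s,t,u\in S$: (G1) $e+_be\equiv e$; (G2) $e+_bf\equiv b;e+_bf$; (G3) $e+_bf\equiv f+_{\bar b}e$; (G4) $(e+_bf)+_cg\equiv e+_{bc}(f+_cg)$; (D1) $e\oplus_{r,s}(f+_bg)\equiv(e\oplus_{r,s}f)+_b(e\oplus_{r,s}g)$; (D2) $e\oplus_{r,s}(f\oplus_{t,u}g)\equiv e\oplus_{r,1}(f\oplus_{st,su}g)$; (D3) $b;(e\oplus_{r,s}f)\equiv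 b;(b;e\oplus_{r,s}b;f)$; (S1) $\mathtt 1;e\equiv e\equiv e;\mathtt 1$; (S2) $(e;f);g\equiv e;(f;g)$; (S3) $\mathtt 0;e\equiv\mathtt 0$; (S4) $(e\oplus_{r,s}f);g\equiv e;g\oplus_{r,s}f;g$; (S5) $(e+_bf);g\equiv e;g+_bf;g$; (S6) $v;e\equiv v$; (S7) $b;c\equiv bc$; (L1) $e^{(b)}\equiv e;e^{(b)}+_b\mathtt 1$; (C1) $\odot1\equiv\mathtt 1$; (C2) $\odot0;e\equiv\odot0$; (W1) $e\oplus_{r,s}e\equiv\odot(r+s);e$; (W2) $e\oplus_{r,s}f\equiv f\oplus_{s,r}e$; (W3) $e\oplus_{r,s}(f\oplus_{t,u}g)\equiv(e\oplus_{r,st}f)\oplus_{1,su}g$; (W4) $e\oplus_{ru,s}f\equiv(\odot u;e)\oplus_{r,s}f$; and closed under the rules (L2) if $e\equiv(f\oplus_{r,s}\mathtt 1)+_cg$ then $c;e^{(b)}\equiv c;((\odot(s^*r);f;e^{(b)})+_b\mathtt 1)$; (F1) if $g\equiv e;g+_bf$ and $E(e)_\alpha=0$ for all $\alpha\in\mathrm{At}$ then $g\equiv e^{(b)};f$. Systems of equations: for a finite set $X$ of indeterminates, a term over $X$ is a generalized guarded sum $\mathrm{GS}_{\alpha\in\mathrm{At}}w_\alpha$ (where $\mathrm{GS}_{\alpha\in\emptyset}:=\mathtt 0$ and $\mathrm{GS}_{\alpha\in\Phi}w_\alpha:=w_\gamma+_\gamma\mathrm{GS}_{\alpha\in\Phi\setminus\{\gamma\}}w_\alpha$)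 of weighted sums $w_\alpha=\bigoplus_{i\in I}r_i\cdot t_i$ (with $I$ finite, $\bigoplus_{i\in I}r_i\cdot t_i:=t_j\oplus_{r_j,1}\bigoplus_{i\in I\setminus\{j\}}r_i\cdot t_i$, empty sum $\odot0$), where each $t_i$ is either an expression $f\in\mathrm{Exp}$ or a formal product $g\,x$ with $g\in\mathrm{Exp}$, $x\in X$. A system is $(X,\tau)$ with $X$ finite and $\tau$ assigning a term to each $x\in X$; it is Salomaa if every $g$ occurring in a subterm $g\,x$ of any $\tau(x)$ satisfies $E(g)_\alpha=0$ for all $\alpha$. For $h:X\to\mathrm{Exp}$, $h^\#$ maps a term to the expression obtained by replacing each $g\,x$ by $g;h(x)$. For a congruence $R$, $h$ is a solution up to $R$ if $(h(x),h^\#(\tau(x)))\in R$ for all $x$. Let $\dot\equiv$ be the least congruence containing $\equiv$ and closed under the rule (UA): if $(X,\tau)$ is a Salomaa system and $f,g:X\to\mathrm{Exp}$ are both solutions of $(X,\tau)$ up to $\dot\equiv$, then $f(x)\mathrel{\dot\equiv}g(x)$ for all $x\in X$. *)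

theory Defs
  imports Main
begin

(* Semirings: semiring with 0,1 (not requiring 0 \<noteq> 1) *)
class wsemiring = semiring_0 + monoid_mult

definition positive_sr :: "'s::wsemiring itself \<Rightarrow> bool" where
  "positive_sr _ \<longleftrightarrow> (\<forall>x y::'s. x + y = 0 \<longrightarrow> x = 0 \<and> y = 0)"

definition refinement_sr :: "'s::wsemiring itself \<Rightarrow> bool" where
  "refinement_sr _ \<longleftrightarrow> (\<forall>x y z w::'s. x + y = z + w \<longrightarrow>
      (\<exists>s t u v. s + t = x \<and> s + u = z \<and> u + v = y \<and> t + v = w))"

definition conway_sr :: "('s::wsemiring \<Rightarrow> 's) \<Rightarrow> bool" where
  "conway_sr star \<longleftrightarrow> (\<forall>a b. star (a + b) = star a * star (b * star a)
                             \<and> star (a * b) = 1 + a * star (b * a) * b)"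

datatype 't bexp = BZero | BOne | BPrim 't | BNot "'t bexp" | BPlus "'t bexp" "'t bexp"
  | BAnd "'t bexp" "'t bexp"

(* Atoms of the free Boolean algebra on 't are represented as sets of primitive tests
   (the ones that are true); "alpha \<le> b" is beval alpha b *)
primrec beval :: "'t set \<Rightarrow> 't bexp \<Rightarrow> bool" where
  "beval \<alpha> BZero = False"
| "beval \<alpha> BOne = True"
| "beval \<alpha> (BPrim t) = (t \<in> \<alpha>)"
| "beval \<alpha> (BNot b) = (\<not> beval \<alpha> b)"
| "beval \<alpha> (BPlus b c) = (beval \<alpha> b \<or> beval \<alpha> c)"
| "beval \<alpha> (BAnd b c) = (beval \<alpha> b \<and> beval \<alpha> c)"

definition beq :: "'t bexp \<Rightarrow> 't bexp \<Rightarrow> bool" where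
  "beq b c \<longleftrightarrow> (\<forall>\<alpha>. beval \<alpha> b = beval \<alpha> c)"

definition atom_test :: "'t set \<Rightarrow> 't bexp" where
  "atom_test \<alpha> = (SOME b. \<forall>\<beta>. beval \<beta> b \<longleftrightarrow> \<beta> = \<alpha>)"

definition atoms_list :: "'t set list" where
  "atoms_list = (SOME xs. distinct xs \<and> set xs = UNIV)"

datatype ('t, 'p, 'v, 's) exp =
    Act 'p
  | Test "'t bexp"
  | GCh "('t, 'p, 'v, 's) exp" "'t bexp" "('t, 'p, 'v, 's) exp"
  | Seq "('t, 'p, 'v, 's) exp" "('t, 'p, 'v, 's) exp"
  | Loop "('t, 'p, 'v, 's) exp" "'t bexp"
  | Ret 'v
  | WCh "('t, 'p, 'v, 's) exp" 's 's "('t, 'p, 'v, 's) exp"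

definition odot :: "'s::wsemiring \<Rightarrow> ('t, 'p, 'v, 's) exp" where
  "odot r = WCh (Test BOne) r 0 (Test BZero)"

datatype ('p, 'v, 'x) obs = Acc | Rej | Out 'v | Tr 'p 'x

definition dlt :: "'a \<Rightarrow> 'a \<Rightarrow> 's::wsemiring" where
  "dlt a = (\<lambda>x. if x = a then 1 else 0)"

definition msum :: "('a \<Rightarrow> 's::wsemiring) \<Rightarrow> 'a set \<Rightarrow> 's" where
  "msum \<nu> A = sum \<nu> {x \<in> A. \<nu> x \<noteq> 0}"

definition fin_supp :: "('a \<Rightarrow> 's::wsemiring) \<Rightarrow> bool" where
  "fin_supp \<nu> \<longleftrightarrow> finite {x. \<nu> x \<noteq> 0}"

definition seq_cont :: "(('p,'v,('t,'p,'v,'s) exp) obs \<Rightarrow> 's::wsemiring)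
    \<Rightarrow> ('t,'p,'v,'s) exp \<Rightarrow> ('p,'v,('t,'p,'v,'s) exp) obs
    \<Rightarrow> (('p,'v,('t,'p,'v,'s) exp) obs \<Rightarrow> 's)" where
  "seq_cont df f x = (case x of Acc \<Rightarrow> df | Rej \<Rightarrow> dlt Rej | Out v \<Rightarrow> dlt (Out v)
                        | Tr p e' \<Rightarrow> dlt (Tr p (Seq e' f)))"

primrec deriv :: "('s::wsemiring \<Rightarrow> 's) \<Rightarrow> ('t, 'p, 'v, 's) exp \<Rightarrow> 't set
    \<Rightarrow> ('p, 'v, ('t, 'p, 'v, 's) exp) obs \<Rightarrow> 's" where
  "deriv star (Test b) \<alpha> = (if beval \<alpha> b then dlt Acc else dlt Rej)"
| "deriv star (Ret v) \<alpha> = dlt (Out v)"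
| "deriv star (Act p) \<alpha> = dlt (Tr p (Test BOne))"
| "deriv star (GCh e b f) \<alpha> = (if beval \<alpha> b then deriv star e \<alpha> else deriv star f \<alpha>)"
| "deriv star (WCh e r s f) \<alpha> = (\<lambda>x. r * deriv star e \<alpha> x + s * deriv star f \<alpha> x)"
| "deriv star (Seq e f) \<alpha> = (\<lambda>ob.
      \<Sum>x\<in>{x. deriv star e \<alpha> x \<noteq> 0}. deriv star e \<alpha> x * seq_cont (deriv star f \<alpha>) f x ob)"
| "deriv star (Loop e b) \<alpha> = (\<lambda>x. case x of
       Acc \<Rightarrow> (if \<not> beval \<alpha> b then 1 else 0)
     | Rej \<Rightarrow> (if beval \<alpha> b then star (deriv star e \<alpha> Acc) * deriv star e \<alpha> Rej else 0)
     | Out v \<Rightarrow> (if beval \<alpha> b then star (deriv star e \<alpha> Acc) * deriv star e \<alpha> (Out v) else 0)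
     | Tr p g \<Rightarrow> (case g of
           Seq e' k \<Rightarrow> (if beval \<alpha> b \<and> k = Loop e b
                          then star (deriv star e \<alpha> Acc) * deriv star e \<alpha> (Tr p e') else 0)
         | _ \<Rightarrow> 0))"

(* Homomorphism from an automaton with carrier X (subset of type 'x) to an automaton on all of 'y *)
definition is_hom :: "'x set \<Rightarrow> ('x \<Rightarrow> 'a \<Rightarrow> ('p,'v,'x) obs \<Rightarrow> 's::wsemiring)
    \<Rightarrow> ('y \<Rightarrow> 'a \<Rightarrow> ('p,'v,'y) obs \<Rightarrow> 's) \<Rightarrow> ('x \<Rightarrow> 'y) \<Rightarrow> bool" where
  "is_hom X \<beta> \<gamma> h \<longleftrightarrow> (\<forall>x\<in>X. \<forall>\<alpha>.
       \<gamma> (h x) \<alpha> Acc = \<beta> x \<alpha> Acc \<and> \<gamma> (h x) \<alpha> Rej = \<beta> x \<alpha> Rej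
     \<and> (\<forall>v. \<gamma> (h x) \<alpha> (Out v) = \<beta> x \<alpha> (Out v))
     \<and> (\<forall>p y. \<gamma> (h x) \<alpha> (Tr p y) = msum (\<beta> x \<alpha>) {Tr p x' | x'. x' \<in> X \<and> h x' = y}))"

definition is_bisim :: "('s::wsemiring \<Rightarrow> 's)
    \<Rightarrow> (('t, 'p, 'v, 's) exp \<times> ('t, 'p, 'v, 's) exp) set \<Rightarrow> bool" where
  "is_bisim star R \<longleftrightarrow> (\<exists>\<rho>.
      (\<forall>r\<in>R. \<forall>\<alpha>. fin_supp (\<rho> r \<alpha>) \<and> (\<forall>p r'. \<rho> r \<alpha> (Tr p r') \<noteq> 0 \<longrightarrow> r' \<in> R))
    \<and> is_hom R \<rho> (deriv star) fst \<and> is_hom R \<rho> (deriv star) snd)"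

definition bisimilar :: "('s::wsemiring \<Rightarrow> 's) \<Rightarrow> ('t, 'p, 'v, 's) exp \<Rightarrow> ('t, 'p, 'v, 's) exp \<Rightarrow> bool" where
  "bisimilar star e f \<longleftrightarrow> (\<exists>R. is_bisim star R \<and> (e, f) \<in> R)"

primrec Eo :: "('t, 'p, 'v, 's::wsemiring) exp \<Rightarrow> 't set \<Rightarrow> 's" where
  "Eo (Act p) \<alpha> = 0"
| "Eo (Ret v) \<alpha> = 0"
| "Eo (Test b) \<alpha> = (if beval \<alpha> b then 1 else 0)"
| "Eo (WCh e r s f) \<alpha> = r * Eo e \<alpha> + s * Eo f \<alpha>"
| "Eo (GCh e b f) \<alpha> = (if beval \<alpha> b then Eo e \<alpha> else Eo f \<alpha>)"
| "Eo (Seq e f) \<alpha> = Eo e \<alpha> * Eo f \<alpha>"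
| "Eo (Loop e b) \<alpha> = (if beval \<alpha> (BNot b) then 1 else 0)"

inductive eqv :: "('s::wsemiring \<Rightarrow> 's) \<Rightarrow> ('t, 'p, 'v, 's) exp \<Rightarrow> ('t, 'p, 'v, 's) exp \<Rightarrow> bool"
  for star :: "'s \<Rightarrow> 's" where
  refl: "eqv star e e"
| sym: "eqv star e f \<Longrightarrow> eqv star f e"
| trans: "eqv star e f \<Longrightarrow> eqv star f g \<Longrightarrow> eqv star e g"
| BA: "beq b c \<Longrightarrow> eqv star (Test b) (Test c)"
| cong_GCh: "eqv star e e' \<Longrightarrow> beq b b' \<Longrightarrow> eqv star f f' \<Longrightarrow> eqv star (GCh e b f) (GCh e' b' f')"
| cong_Seq: "eqv star e e' \<Longrightarrow> eqv star f f' \<Longrightarrow> eqv star (Seq e f) (Seq e' f')"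
| cong_Loop: "eqv star e e' \<Longrightarrow> beq b b' \<Longrightarrow> eqv star (Loop e b) (Loop e' b')"
| cong_WCh: "eqv star e e' \<Longrightarrow> eqv star f f' \<Longrightarrow> eqv star (WCh e r s f) (WCh e' r s f')"
| G1: "eqv star (GCh e b e) e"
| G2: "eqv star (GCh e b f) (GCh (Seq (Test b) e) b f)"
| G3: "eqv star (GCh e b f) (GCh f (BNot b) e)"
| G4: "eqv star (GCh (GCh e b f) c g) (GCh e (BAnd b c) (GCh f c g))"
| D1: "eqv star (WCh e r s (GCh f b g)) (GCh (WCh e r s f) b (WCh e r s g))"
| D2: "eqv star (WCh e r s (WCh f t u g)) (WCh e r 1 (WCh f (s * t) (s * u) g))"
| D3: "eqv star (Seq (Test b) (WCh e r s f)) (Seq (Test b) (WCh (Seq (Test b) e) r s (Seq (Test b) f)))"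
| S1a: "eqv star (Seq (Test BOne) e) e"
| S1b: "eqv star e (Seq e (Test BOne))"
| S2: "eqv star (Seq (Seq e f) g) (Seq e (Seq f g))"
| S3: "eqv star (Seq (Test BZero) e) (Test BZero)"
| S4: "eqv star (Seq (WCh e r s f) g) (WCh (Seq e g) r s (Seq f g))"
| S5: "eqv star (Seq (GCh e b f) g) (GCh (Seq e g) b (Seq f g))"
| S6: "eqv star (Seq (Ret v) e) (Ret v)"
| S7: "eqv star (Seq (Test b) (Test c)) (Test (BAnd b c))"
| L1: "eqv star (Loop e b) (GCh (Seq e (Loop e b)) b (Test BOne))"
| C1: "eqv star (odot 1) (Test BOne)"
| C2: "eqv star (Seq (odot 0) e) (odot 0)"
| W1: "eqv star (WCh e r s e) (Seq (odot (r + s)) e)"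
| W2: "eqv star (WCh e r s f) (WCh f s r e)"
| W3: "eqv star (WCh e r s (WCh f t u g)) (WCh (WCh e r (s * t) f) 1 (s * u) g)"
| W4: "eqv star (WCh e (r * u) s f) (WCh (Seq (odot u) e) r s f)"
| L2: "eqv star e (GCh (WCh f r s (Test BOne)) c g) \<Longrightarrow>
       eqv star (Seq (Test c) (Loop e b))
                (Seq (Test c) (GCh (Seq (odot (star s * r)) (Seq f (Loop e b))) b (Test BOne)))"
| F1: "eqv star g (GCh (Seq e g) b f) \<Longrightarrow> (\<forall>\<alpha>. Eo e \<alpha> = 0) \<Longrightarrow> eqv star g (Seq (Loop e b) f)"

(* Systems of equations; indeterminates are natural numbers *)
datatype ('t, 'p, 'v, 's) sumd = SExp "('t, 'p, 'v, 's) exp" | SVar "('t, 'p, 'v, 's) exp" nat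

(* a term: for each atom a weighted sum, given as a finite list of (weight, summand) *)
type_synonym ('t, 'p, 'v, 's) sterm = "'t set \<Rightarrow> ('s \<times> ('t, 'p, 'v, 's) sumd) list"

primrec sumd_inst :: "(nat \<Rightarrow> ('t, 'p, 'v, 's) exp) \<Rightarrow> ('t, 'p, 'v, 's) sumd \<Rightarrow> ('t, 'p, 'v, 's) exp" where
  "sumd_inst h (SExp f) = f"
| "sumd_inst h (SVar g x) = Seq g (h x)"

fun wsum :: "('s \<times> ('t, 'p, 'v, 's::wsemiring) exp) list \<Rightarrow> ('t, 'p, 'v, 's) exp" where
  "wsum [] = odot 0"
| "wsum ((r, t) # rest) = WCh t r 1 (wsum rest)"

primrec gsum :: "'t set list \<Rightarrow> ('t set \<Rightarrow> ('t, 'p, 'v, 's) exp) \<Rightarrow> ('t, 'p, 'v, 's) exp" where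
  "gsum [] w = Test BZero"
| "gsum (\<gamma> # \<gamma>s) w = GCh (w \<gamma>) (atom_test \<gamma>) (gsum \<gamma>s w)"

definition hsharp :: "(nat \<Rightarrow> ('t, 'p, 'v, 's::wsemiring) exp) \<Rightarrow> ('t, 'p, 'v, 's) sterm
    \<Rightarrow> ('t, 'p, 'v, 's) exp" where
  "hsharp h \<tau> = gsum atoms_list (\<lambda>\<alpha>. wsum (map (\<lambda>(r, t). (r, sumd_inst h t)) (\<tau> \<alpha>)))"

definition is_system :: "nat set \<Rightarrow> (nat \<Rightarrow> ('t, 'p, 'v, 's) sterm) \<Rightarrow> bool" where
  "is_system X \<tau> \<longleftrightarrow> finite X \<and>
     (\<forall>x\<in>X. \<forall>\<alpha> r g y. (r, SVar g y) \<in> set (\<tau> x \<alpha>) \<longrightarrow> y \<in> X)"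

definition salomaa :: "nat set \<Rightarrow> (nat \<Rightarrow> ('t, 'p, 'v, 's::wsemiring) sterm) \<Rightarrow> bool" where
  "salomaa X \<tau> \<longleftrightarrow> (\<forall>x\<in>X. \<forall>\<alpha> r g y. (r, SVar g y) \<in> set (\<tau> x \<alpha>) \<longrightarrow> (\<forall>\<beta>. Eo g \<beta> = 0))"

inductive deqv :: "('s::wsemiring \<Rightarrow> 's) \<Rightarrow> ('t, 'p, 'v, 's) exp \<Rightarrow> ('t, 'p, 'v, 's) exp \<Rightarrow> bool"
  for star :: "'s \<Rightarrow> 's" where
  base: "eqv star e f \<Longrightarrow> deqv star e f"
| refl: "deqv star e e"
| sym: "deqv star e f \<Longrightarrow> deqv star f e"
| trans: "deqv star e f \<Longrightarrow> deqv star f g \<Longrightarrow> deqv star e g"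
| cong_GCh: "deqv star e e' \<Longrightarrow> beq b b' \<Longrightarrow> deqv star f f' \<Longrightarrow> deqv star (GCh e b f) (GCh e' b' f')"
| cong_Seq: "deqv star e e' \<Longrightarrow> deqv star f f' \<Longrightarrow> deqv star (Seq e f) (Seq e' f')"
| cong_Loop: "deqv star e e' \<Longrightarrow> beq b b' \<Longrightarrow> deqv star (Loop e b) (Loop e' b')"
| cong_WCh: "deqv star e e' \<Longrightarrow> deqv star f f' \<Longrightarrow> deqv star (WCh e r s f) (WCh e' r s f')"
| UA: "is_system X \<tau> \<Longrightarrow> salomaa X \<tau> \<Longrightarrow>
       (\<forall>x. x \<in> X \<longrightarrow> deqv star (f x) (hsharp f (\<tau> x))) \<Longrightarrow>
       (\<forall>x. x \<in> X \<longrightarrow> deqv star (g x) (hsharp g (\<tau> x))) \<Longrightarrow>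
       x \<in> X \<Longrightarrow> deqv star (f x) (g x)"

end

theory Submission
  imports Defs
begin

text \<open>
  Under every atom \<open>\<alpha>\<close>, an expression is provably equal to the weighted sum of its one-step
  observations, with acceptance read as \<open>1\<close>, rejection as \<open>0\<close>, a return value as itself and
  a transition \<open>(p, e')\<close> as \<open>p; e'\<close>; gluing these sums over all atoms gives
  \<open>e \<equiv> GS\<^sub>\<alpha> \<partial>(e)\<^sub>\<alpha>\<close> (the fundamental theorem).

  The derivatives of \<open>e\<close> stay in a finite set \<open>dcl e\<close>. Given a bisimulation \<open>R\<close> containing
  \<open>(e, f)\<close>, positivity of the semiring ensures that a nonzero transition of \<open>R\<close> projects to
  nonzero transitions of both components, so the finitely many pairs of \<open>R\<close> in
  \<open>dcl e \<times> dcl f\<close> are closed under transitions. Their transition structure is a system of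
  equations with one unknown per pair in which every unknown is guarded by an action, hence a
  Salomaa system. Because both projections are homomorphisms, the fundamental theorem shows that
  the first components and the second components both solve it up to \<open>\<equiv>\<close>, and (UA)
  identifies them.
\<close>

declare eqv.trans[trans]

section \<open>Derived laws of guarded choice\<close>

lemma beq_refl: "beq b b"
  by (simp add: beq_def)

lemma eqv_GCh_left: "eqv star e e' \<Longrightarrow> eqv star (GCh e b f) (GCh e' b f)"
  by (blast intro: eqv.cong_GCh eqv.refl beq_refl)

lemma eqv_GCh_right: "eqv star f f' \<Longrightarrow> eqv star (GCh e b f) (GCh e b f')"
  by (blast intro: eqv.cong_GCh eqv.refl beq_refl)

lemma eqv_GCh_guard: "beq b b' \<Longrightarrow> eqv star (GCh e b f) (GCh e b' f)"
  by (blast intro: eqv.cong_GCh eqv.refl)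

lemma eqv_Seq_left: "eqv star e e' \<Longrightarrow> eqv star (Seq e f) (Seq e' f)"
  by (blast intro: eqv.cong_Seq eqv.refl)

lemma eqv_Seq_right: "eqv star f f' \<Longrightarrow> eqv star (Seq e f) (Seq e f')"
  by (blast intro: eqv.cong_Seq eqv.refl)

lemma eqv_WCh_left: "eqv star e e' \<Longrightarrow> eqv star (WCh e r s f) (WCh e' r s f)"
  by (blast intro: eqv.cong_WCh eqv.refl)

lemma eqv_WCh_right: "eqv star f f' \<Longrightarrow> eqv star (WCh e r s f) (WCh e r s f')"
  by (blast intro: eqv.cong_WCh eqv.refl)

lemma GCh_BZero: "eqv star (GCh e BZero f) f"
proof -
  have "eqv star (GCh e BZero f) (GCh (Seq (Test BZero) e) BZero f)" by (rule eqv.G2)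
  also have "eqv star \<dots> (GCh (Test BZero) BZero f)" by (rule eqv_GCh_left, rule eqv.S3)
  also have "eqv star \<dots> (GCh (Seq (Test BZero) f) BZero f)"
    by (rule eqv_GCh_left, rule eqv.sym, rule eqv.S3)
  also have "eqv star \<dots> (GCh f BZero f)" by (rule eqv.sym, rule eqv.G2)
  also have "eqv star \<dots> f" by (rule eqv.G1)
  finally show ?thesis .
qed

lemma GCh_false: "beq b BZero \<Longrightarrow> eqv star (GCh e b f) f"
  by (rule eqv.trans, erule eqv_GCh_guard, rule GCh_BZero)

lemma GCh_true: "beq b BOne \<Longrightarrow> eqv star (GCh e b f) e"
  by (rule eqv.trans, rule eqv.G3, rule GCh_false) (simp add: beq_def)

lemma GCh_absorb: "eqv star (GCh e c (GCh f c g)) (GCh e c g)"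
proof -
  have "eqv star (GCh e c (GCh f c g)) (GCh (GCh f c g) (BNot c) e)" by (rule eqv.G3)
  also have "eqv star \<dots> (GCh f (BAnd c (BNot c)) (GCh g (BNot c) e))" by (rule eqv.G4)
  also have "eqv star \<dots> (GCh g (BNot c) e)" by (rule GCh_false) (simp add: beq_def)
  also have "eqv star \<dots> (GCh e (BNot (BNot c)) g)" by (rule eqv.G3)
  also have "eqv star \<dots> (GCh e c g)" by (rule eqv_GCh_guard) (simp add: beq_def)
  finally show ?thesis .
qed

lemma Seq_Test_eqv_GCh: "eqv star (Seq (Test b) e) (GCh e b (Test BZero))"
proof -
  have "eqv star (Seq (Test b) e) (GCh (Seq (Test b) e) b (Seq (Test b) e))"
    by (rule eqv.sym, rule eqv.G1)
  also have "eqv star \<dots> (GCh e b (Seq (Test b) e))" by (rule eqv.sym, rule eqv.G2)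
  also have "eqv star \<dots> (GCh (Seq (Test b) e) (BNot b) e)" by (rule eqv.G3)
  also have "eqv star \<dots> (GCh (Seq (Test (BNot b)) (Seq (Test b) e)) (BNot b) e)" by (rule eqv.G2)
  also have "eqv star \<dots> (GCh (Seq (Seq (Test (BNot b)) (Test b)) e) (BNot b) e)"
    by (rule eqv_GCh_left, rule eqv.sym, rule eqv.S2)
  also have "eqv star \<dots> (GCh (Seq (Test (BAnd (BNot b) b)) e) (BNot b) e)"
    by (rule eqv_GCh_left, rule eqv_Seq_left, rule eqv.S7)
  also have "eqv star \<dots> (GCh (Seq (Test BZero) e) (BNot b) e)"
    by (rule eqv_GCh_left, rule eqv_Seq_left, rule eqv.BA) (simp add: beq_def)
  also have "eqv star \<dots> (GCh (Test BZero) (BNot b) e)" by (rule eqv_GCh_left, rule eqv.S3)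
  also have "eqv star \<dots> (GCh e (BNot (BNot b)) (Test BZero))" by (rule eqv.G3)
  also have "eqv star \<dots> (GCh e b (Test BZero))" by (rule eqv_GCh_guard) (simp add: beq_def)
  finally show ?thesis .
qed

lemma guarded_GCh_left:
  assumes "\<And>\<beta>. beval \<beta> b \<Longrightarrow> beval \<beta> c"
  shows "eqv star (Seq (Test b) (GCh e c f)) (Seq (Test b) e)"
proof -
  have "eqv star (Seq (Test b) (GCh e c f)) (GCh (GCh e c f) b (Test BZero))"
    by (rule Seq_Test_eqv_GCh)
  also have "eqv star \<dots> (GCh e (BAnd c b) (GCh f b (Test BZero)))" by (rule eqv.G4)
  also have "eqv star \<dots> (GCh e b (GCh f b (Test BZero)))"
    by (rule eqv_GCh_guard) (use assms in \<open>auto simp add: beq_def\<close>)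
  also have "eqv star \<dots> (GCh e b (Test BZero))" by (rule GCh_absorb)
  also have "eqv star \<dots> (Seq (Test b) e)" by (rule eqv.sym, rule Seq_Test_eqv_GCh)
  finally show ?thesis .
qed

lemma guarded_GCh_right:
  assumes "\<And>\<beta>. beval \<beta> b \<Longrightarrow> \<not> beval \<beta> c"
  shows "eqv star (Seq (Test b) (GCh e c f)) (Seq (Test b) f)"
proof -
  have "eqv star (Seq (Test b) (GCh e c f)) (Seq (Test b) (GCh f (BNot c) e))"
    by (rule eqv_Seq_right, rule eqv.G3)
  also have "eqv star \<dots> (Seq (Test b) f)" by (rule guarded_GCh_left) (use assms in simp)
  finally show ?thesis .
qed

lemma GCh_BPlus: "eqv star (GCh e (BPlus b c) f) (GCh e b (GCh e c f))"
proof -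
  have "eqv star (GCh e (BPlus b c) f) (GCh (GCh e b e) (BPlus b c) f)"
    by (rule eqv_GCh_left, rule eqv.sym, rule eqv.G1)
  also have "eqv star \<dots> (GCh e (BAnd b (BPlus b c)) (GCh e (BPlus b c) f))" by (rule eqv.G4)
  also have "eqv star \<dots> (GCh e b (GCh e (BPlus b c) f))" by (rule eqv_GCh_guard) (auto simp: beq_def)
  also have "eqv star \<dots> (GCh (GCh e (BPlus b c) f) (BNot b) e)" by (rule eqv.G3)
  also have "eqv star \<dots> (GCh e (BAnd (BPlus b c) (BNot b)) (GCh f (BNot b) e))" by (rule eqv.G4)
  also have "eqv star \<dots> (GCh e (BAnd c (BNot b)) (GCh f (BNot b) e))"
    by (rule eqv_GCh_guard) (auto simp: beq_def)
  also have "eqv star \<dots> (GCh (GCh e c f) (BNot b) e)" by (rule eqv.sym, rule eqv.G4)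
  also have "eqv star \<dots> (GCh e b (GCh e c f))" by (rule eqv.sym, rule eqv.G3)
  finally show ?thesis .
qed

lemma guarded_WCh:
  assumes "eqv star (Seq (Test b) e) (Seq (Test b) e')"
    and "eqv star (Seq (Test b) f) (Seq (Test b) f')"
  shows "eqv star (Seq (Test b) (WCh e r s f)) (Seq (Test b) (WCh e' r s f'))"
proof -
  have "eqv star (Seq (Test b) (WCh e r s f))
      (Seq (Test b) (WCh (Seq (Test b) e) r s (Seq (Test b) f)))" by (rule eqv.D3)
  also have "eqv star \<dots> (Seq (Test b) (WCh (Seq (Test b) e') r s (Seq (Test b) f')))"
    using assms by (blast intro: eqv_Seq_right eqv.cong_WCh)
  also have "eqv star \<dots> (Seq (Test b) (WCh e' r s f'))" by (rule eqv.sym, rule eqv.D3)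
  finally show ?thesis .
qed

lemma guarded_Seq_left:
  assumes "eqv star (Seq (Test b) e) (Seq (Test b) e')"
  shows "eqv star (Seq (Test b) (Seq e f)) (Seq (Test b) (Seq e' f))"
proof -
  have "eqv star (Seq (Test b) (Seq e f)) (Seq (Seq (Test b) e) f)" by (rule eqv.sym, rule eqv.S2)
  also have "eqv star \<dots> (Seq (Seq (Test b) e') f)" by (rule eqv_Seq_left, rule assms)
  also have "eqv star \<dots> (Seq (Test b) (Seq e' f))" by (rule eqv.S2)
  finally show ?thesis .
qed

lemma GCh_intro_guarded:
  assumes "eqv star (Seq (Test c) e) (Seq (Test c) f)"
  shows "eqv star e (GCh f c e)"
proof -
  have "eqv star e (GCh e c e)" by (rule eqv.sym, rule eqv.G1)
  also have "eqv star \<dots> (GCh (Seq (Test c) e) c e)" by (rule eqv.G2)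
  also have "eqv star \<dots> (GCh (Seq (Test c) f) c e)" by (rule eqv_GCh_left, rule assms)
  also have "eqv star \<dots> (GCh f c e)" by (rule eqv.sym, rule eqv.G2)
  finally show ?thesis .
qed

section \<open>Atoms and guarded sums\<close>

lemma atom_test_exists: "\<exists>b. \<forall>\<beta>. beval \<beta> b \<longleftrightarrow> \<beta> = (\<alpha>::'t::finite set)"
proof -
  have agree: "\<exists>b. \<forall>\<beta>. beval \<beta> b \<longleftrightarrow> (\<forall>t\<in>set ts. t \<in> \<beta> \<longleftrightarrow> t \<in> \<alpha>)" for ts :: "'t list"
  proof (induction ts)
    case Nil
    show ?case by (rule exI[of _ BOne]) simp
  next
    case (Cons t ts)
    then obtain b where b: "\<forall>\<beta>. beval \<beta> b \<longleftrightarrow> (\<forall>t\<in>set ts. t \<in> \<beta> \<longleftrightarrow> t \<in> \<alpha>)" by blast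
    show ?case
    proof (cases "t \<in> \<alpha>")
      case True
      with b show ?thesis by (intro exI[of _ "BAnd (BPrim t) b"]) auto
    next
      case False
      with b show ?thesis by (intro exI[of _ "BAnd (BNot (BPrim t)) b"]) auto
    qed
  qed
  obtain ts :: "'t list" where "set ts = UNIV"
    using finite_list[OF finite_UNIV] by blast
  with agree[of ts] show ?thesis by auto
qed

lemma beval_atom_test: "beval \<beta> (atom_test (\<alpha>::'t::finite set)) \<longleftrightarrow> \<beta> = \<alpha>"
  unfolding atom_test_def by (rule someI_ex[OF atom_test_exists, rule_format])

lemma atoms_list: "distinct (atoms_list :: 't::finite set list)" "set (atoms_list :: 't set list) = UNIV"
proof -
  have "distinct (atoms_list :: 't set list) \<and> set (atoms_list :: 't set list) = UNIV"
    unfolding atoms_list_def by (rule someI_ex) (use finite_distinct_list[OF finite_UNIV] in blast)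
  then show "distinct (atoms_list :: 't::finite set list)" "set (atoms_list :: 't set list) = UNIV"
    by auto
qed

primrec atoms_disj :: "'t set list \<Rightarrow> 't bexp" where
  "atoms_disj [] = BZero"
| "atoms_disj (\<gamma> # \<gamma>s) = BPlus (atom_test \<gamma>) (atoms_disj \<gamma>s)"

lemma beval_atoms_disj: "beval \<beta> (atoms_disj (\<gamma>s :: 't::finite set list)) \<longleftrightarrow> \<beta> \<in> set \<gamma>s"
  by (induction \<gamma>s) (auto simp: beval_atom_test)

lemma gsum_const: "eqv star (gsum \<gamma>s (\<lambda>_. e)) (GCh e (atoms_disj \<gamma>s) (Test BZero))"
proof (induction \<gamma>s)
  case Nil
  show ?case by (simp, rule eqv.sym, rule GCh_BZero)
next
  case (Cons \<gamma> \<gamma>s)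
  have "eqv star (gsum (\<gamma> # \<gamma>s) (\<lambda>_. e))
      (GCh e (atom_test \<gamma>) (GCh e (atoms_disj \<gamma>s) (Test BZero)))"
    by (simp, rule eqv_GCh_right, rule Cons)
  also have "eqv star \<dots> (GCh e (atoms_disj (\<gamma> # \<gamma>s)) (Test BZero))"
    by (simp, rule eqv.sym, rule GCh_BPlus)
  finally show ?case .
qed

lemma gsum_cong_guarded:
  assumes "\<And>\<gamma>. \<gamma> \<in> set \<gamma>s \<Longrightarrow>
    eqv star (Seq (Test (atom_test \<gamma>)) (w \<gamma>)) (Seq (Test (atom_test \<gamma>)) (w' \<gamma>))"
  shows "eqv star (gsum \<gamma>s w) (gsum \<gamma>s w')"
  using assms
proof (induction \<gamma>s)
  case Nil
  show ?case by (simp add: eqv.refl)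
next
  case (Cons \<gamma> \<gamma>s)
  have "eqv star (gsum (\<gamma> # \<gamma>s) w) (GCh (Seq (Test (atom_test \<gamma>)) (w \<gamma>)) (atom_test \<gamma>) (gsum \<gamma>s w))"
    by (simp, rule eqv.G2)
  also have "eqv star \<dots> (GCh (Seq (Test (atom_test \<gamma>)) (w' \<gamma>)) (atom_test \<gamma>) (gsum \<gamma>s w'))"
    using Cons by (intro eqv.cong_GCh) (auto intro: beq_refl)
  also have "eqv star \<dots> (gsum (\<gamma> # \<gamma>s) w')" by (simp, rule eqv.sym, rule eqv.G2)
  finally show ?case .
qed

lemma eqv_by_atoms:
  fixes e f :: "('t::finite, 'p, 'v, 's::wsemiring) exp"
  assumes "\<And>\<alpha>. eqv star (Seq (Test (atom_test \<alpha>)) e) (Seq (Test (atom_test \<alpha>)) f)"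
  shows "eqv star e f"
proof -
  let ?all = "atoms_disj (atoms_list :: 't set list)"
  have all: "beq ?all BOne" by (simp add: beq_def beval_atoms_disj atoms_list)
  have "eqv star e (GCh e ?all (Test BZero))" by (rule eqv.sym, rule GCh_true, rule all)
  also have "eqv star \<dots> (gsum atoms_list (\<lambda>_. e))" by (rule eqv.sym, rule gsum_const)
  also have "eqv star \<dots> (gsum atoms_list (\<lambda>_. f))" by (rule gsum_cong_guarded, rule assms)
  also have "eqv star \<dots> (GCh f ?all (Test BZero))" by (rule gsum_const)
  also have "eqv star \<dots> f" by (rule GCh_true, rule all)
  finally show ?thesis .
qed

lemma guarded_gsum:
  fixes w :: "'t::finite set \<Rightarrow> ('t, 'p, 'v, 's::wsemiring) exp"
  assumes "\<alpha> \<in> set \<gamma>s"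
  shows "eqv star (Seq (Test (atom_test \<alpha>)) (gsum \<gamma>s w)) (Seq (Test (atom_test \<alpha>)) (w \<alpha>))"
  using assms
proof (induction \<gamma>s)
  case Nil
  then show ?case by simp
next
  case (Cons \<gamma> \<gamma>s)
  show ?case
  proof (cases "\<gamma> = \<alpha>")
    case True
    then show ?thesis by (simp, intro guarded_GCh_left) (simp add: beval_atom_test)
  next
    case False
    then have "eqv star (Seq (Test (atom_test \<alpha>)) (gsum (\<gamma> # \<gamma>s) w))
        (Seq (Test (atom_test \<alpha>)) (gsum \<gamma>s w))"
      by (simp, intro guarded_GCh_right) (auto simp: beval_atom_test)
    also have "eqv star \<dots> (Seq (Test (atom_test \<alpha>)) (w \<alpha>))"
      using Cons False by simp
    finally show ?thesis .
  qed
qed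

lemma eqv_gsum_if_guarded:
  fixes e :: "('t::finite, 'p, 'v, 's::wsemiring) exp"
  assumes "\<And>\<alpha>. eqv star (Seq (Test (atom_test \<alpha>)) e) (Seq (Test (atom_test \<alpha>)) (w \<alpha>))"
  shows "eqv star e (gsum atoms_list w)"
proof (rule eqv_by_atoms)
  fix \<alpha> :: "'t set"
  have "eqv star (Seq (Test (atom_test \<alpha>)) e) (Seq (Test (atom_test \<alpha>)) (w \<alpha>))" by (rule assms)
  also have "eqv star \<dots> (Seq (Test (atom_test \<alpha>)) (gsum atoms_list w))"
    by (rule eqv.sym, rule guarded_gsum) (simp add: atoms_list)
  finally show "eqv star (Seq (Test (atom_test \<alpha>)) e) (Seq (Test (atom_test \<alpha>)) (gsum atoms_list w))" .
qed

section \<open>Weighted sums\<close>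

fun wsum_onto ::
  "('s::wsemiring \<times> ('t, 'p, 'v, 's) exp) list \<Rightarrow> ('t, 'p, 'v, 's) exp \<Rightarrow> ('t, 'p, 'v, 's) exp"
  where
  "wsum_onto [] f = f"
| "wsum_onto ((r, e) # xs) f = WCh e r 1 (wsum_onto xs f)"

definition scale :: "'s::wsemiring \<Rightarrow> ('s \<times> 'a) list \<Rightarrow> ('s \<times> 'a) list" where
  "scale r xs = map (\<lambda>(p, e). (r * p, e)) xs"

lemma scale_simps [simp]:
  "scale r [] = []"
  "scale r ((p, e) # xs) = (r * p, e) # scale r xs"
  "scale r (xs @ ys) = scale r xs @ scale r ys"
  by (auto simp: scale_def)

lemma wsum_append: "wsum (xs @ ys) = wsum_onto xs (wsum ys)"
  by (induction xs rule: wsum.induct) auto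

lemma odot_Seq: "eqv star (Seq (odot u) e) (WCh e u 0 (Test BZero))"
proof -
  have "eqv star (Seq (odot u) e) (WCh (Seq (Test BOne) e) u 0 (Seq (Test BZero) e))"
    unfolding odot_def by (rule eqv.S4)
  also have "eqv star \<dots> (WCh e u 0 (Test BZero))"
    by (rule eqv.cong_WCh, rule eqv.S1a, rule eqv.S3)
  finally show ?thesis .
qed

lemma WCh_0_right: "eqv star (WCh e r 0 f) (WCh e r 0 f')"
proof -
  have normal: "eqv star (WCh e r 0 g) (WCh (odot 0) 1 r e)" for g
  proof -
    have "eqv star (WCh e r 0 g) (WCh g 0 r e)" by (rule eqv.W2)
    also have "eqv star \<dots> (WCh (Seq (odot 0) g) 1 r e)"
      using eqv.W4[where r=1 and u=0 and e=g and s=r and f=e] by simp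
    also have "eqv star \<dots> (WCh (odot 0) 1 r e)" by (rule eqv_WCh_left, rule eqv.C2)
    finally show ?thesis .
  qed
  show ?thesis by (rule eqv.trans, rule normal, rule eqv.sym, rule normal)
qed

lemma WCh_1_0: "eqv star (WCh e 1 0 f) e"
proof -
  have "eqv star (WCh e 1 0 f) (WCh e 1 0 (Test BZero))" by (rule WCh_0_right)
  also have "eqv star \<dots> (Seq (odot 1) e)" by (rule eqv.sym, rule odot_Seq)
  also have "eqv star \<dots> (Seq (Test BOne) e)" by (rule eqv_Seq_left, rule eqv.C1)
  also have "eqv star \<dots> e" by (rule eqv.S1a)
  finally show ?thesis .
qed

lemma WCh_0_1: "eqv star (WCh e 0 1 f) f"
  by (rule eqv.trans, rule eqv.W2, rule WCh_1_0)

lemma odot_Seq_WCh: "eqv star (Seq (odot u) (WCh e r s f)) (WCh e (u * r) (u * s) f)"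
proof -
  have "eqv star (Seq (odot u) (WCh e r s f)) (WCh (WCh e r s f) u 0 (Test BZero))"
    by (rule odot_Seq)
  also have "eqv star \<dots> (WCh (Test BZero) 0 u (WCh e r s f))" by (rule eqv.W2)
  also have "eqv star \<dots> (WCh (Test BZero) 0 1 (WCh e (u * r) (u * s) f))" by (rule eqv.D2)
  also have "eqv star \<dots> (WCh e (u * r) (u * s) f)" by (rule WCh_0_1)
  finally show ?thesis .
qed

lemma odot_Seq_odot0: "eqv star (Seq (odot r) (odot 0)) (odot 0)"
  using odot_Seq_WCh[of star r "Test BOne" 0 0 "Test BZero"] by (simp add: odot_def)

lemma WCh_odot0_left: "eqv star (WCh (odot 0) r 1 f) f"
proof -
  have "eqv star (WCh (odot 0) r 1 f) (WCh (Seq (odot r) (odot 0)) 1 1 f)"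
    using eqv.W4[where r=1 and u=r and e="odot 0" and s=1 and f=f] by simp
  also have "eqv star \<dots> (WCh (odot 0) 1 1 f)" by (rule eqv_WCh_left, rule odot_Seq_odot0)
  also have "eqv star \<dots> (WCh f 1 1 (odot 0))" by (rule eqv.W2)
  also have "eqv star \<dots> (WCh (WCh f 1 0 (Test BOne)) 1 0 (Test BZero))"
    unfolding odot_def
    using eqv.W3[where e=f and r=1 and s=1 and f="Test BOne" and t=0 and u=0 and g="Test BZero"]
    by simp
  also have "eqv star \<dots> (WCh f 1 0 (Test BOne))" by (rule WCh_1_0)
  also have "eqv star \<dots> f" by (rule WCh_1_0)
  finally show ?thesis .
qed

lemma WCh_right_weight: "eqv star (WCh e p r f) (WCh e p 1 (Seq (odot r) f))"
proof -
  have "eqv star (WCh e p r f) (WCh e p r (WCh f 1 0 (Test BZero)))"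
    by (rule eqv_WCh_right, rule eqv.sym, rule WCh_1_0)
  also have "eqv star \<dots> (WCh e p 1 (WCh f r 0 (Test BZero)))"
    using eqv.D2[where e=e and r=p and s=r and f=f and t=1 and u=0 and g="Test BZero"] by simp
  also have "eqv star \<dots> (WCh e p 1 (Seq (odot r) f))" by (rule eqv_WCh_right, rule eqv.sym, rule odot_Seq)
  finally show ?thesis .
qed

lemma WCh_1_swap: "eqv star (WCh e p 1 (WCh f q 1 g)) (WCh f q 1 (WCh e p 1 g))"
proof -
  have "eqv star (WCh e p 1 (WCh f q 1 g)) (WCh (WCh e p q f) 1 1 g)"
    using eqv.W3[where e=e and r=p and s=1 and f=f and t=q and u=1 and g=g] by simp
  also have "eqv star \<dots> (WCh (WCh f q p e) 1 1 g)" by (rule eqv_WCh_left, rule eqv.W2)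
  also have "eqv star \<dots> (WCh f q 1 (WCh e p 1 g))"
    using eqv.W3[where e=f and r=q and s=1 and f=e and t=p and u=1 and g=g] by (simp add: eqv.sym)
  finally show ?thesis .
qed

lemma WCh_1_merge: "eqv star (WCh e p 1 (WCh e q 1 g)) (WCh e (p + q) 1 g)"
proof -
  have "eqv star (WCh e p 1 (WCh e q 1 g)) (WCh (WCh e p q e) 1 1 g)"
    using eqv.W3[where e=e and r=p and s=1 and f=e and t=q and u=1 and g=g] by simp
  also have "eqv star \<dots> (WCh (Seq (odot (p + q)) e) 1 1 g)" by (rule eqv_WCh_left, rule eqv.W1)
  also have "eqv star \<dots> (WCh e (p + q) 1 g)"
    using eqv.W4[where r=1 and u="p + q" and e=e and s=1 and f=g] by (simp add: eqv.sym)
  finally show ?thesis .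
qed

lemma WCh_1_assoc: "eqv star (WCh (WCh e p 1 f) r 1 g) (WCh e (r * p) 1 (WCh f r 1 g))"
proof -
  have "eqv star (WCh (WCh e p 1 f) r 1 g) (WCh (Seq (odot r) (WCh e p 1 f)) 1 1 g)"
    using eqv.W4[where r=1 and u=r and e="WCh e p 1 f" and s=1 and f=g] by simp
  also have "eqv star \<dots> (WCh (WCh e (r * p) r f) 1 1 g)"
    using odot_Seq_WCh[of star r e p 1 f] by (simp add: eqv_WCh_left)
  also have "eqv star \<dots> (WCh e (r * p) 1 (WCh f r 1 g))"
    using eqv.W3[where e=e and r="r * p" and s=1 and f=f and t=r and u=1 and g=g] by (simp add: eqv.sym)
  finally show ?thesis .
qed

lemma wsum_single: "eqv star (wsum [(1, e)]) e"
  by (simp, rule eqv.trans, rule eqv.W2, rule WCh_odot0_left)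

lemma WCh_wsum_flatten: "eqv star (WCh (wsum xs) r 1 f) (wsum_onto (scale r xs) f)"
proof (induction xs rule: wsum.induct)
  case 1
  show ?case by (simp, rule WCh_odot0_left)
next
  case (2 p e xs)
  have "eqv star (WCh (wsum ((p, e) # xs)) r 1 f) (WCh e (r * p) 1 (WCh (wsum xs) r 1 f))"
    by (simp, rule WCh_1_assoc)
  also have "eqv star \<dots> (wsum_onto (scale r ((p, e) # xs)) f)" by (simp, rule eqv_WCh_right, rule 2)
  finally show ?case .
qed

lemma odot_Seq_wsum: "eqv star (Seq (odot r) (wsum xs)) (wsum (scale r xs))"
proof (induction xs rule: wsum.induct)
  case 1
  show ?case by (simp, rule odot_Seq_odot0)
next
  case (2 p e xs)
  have "eqv star (Seq (odot r) (wsum ((p, e) # xs))) (WCh e (r * p) r (wsum xs))"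
    using odot_Seq_WCh[of star r e p 1 "wsum xs"] by simp
  also have "eqv star \<dots> (WCh e (r * p) 1 (Seq (odot r) (wsum xs)))" by (rule WCh_right_weight)
  also have "eqv star \<dots> (wsum (scale r ((p, e) # xs)))" by (simp, rule eqv_WCh_right, rule 2)
  finally show ?case .
qed

lemma WCh_wsum: "eqv star (WCh (wsum xs) r s (wsum ys)) (wsum (scale s ys @ scale r xs))"
proof -
  have "eqv star (WCh (wsum xs) r s (wsum ys)) (WCh (Seq (odot r) (wsum xs)) 1 s (wsum ys))"
    using eqv.W4[where r=1 and u=r and e="wsum xs" and s=s and f="wsum ys"] by simp
  also have "eqv star \<dots> (WCh (wsum (scale r xs)) 1 s (wsum ys))"
    by (rule eqv_WCh_left, rule odot_Seq_wsum)
  also have "eqv star \<dots> (WCh (wsum ys) s 1 (wsum (scale r xs)))" by (rule eqv.W2)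
  also have "eqv star \<dots> (wsum_onto (scale s ys) (wsum (scale r xs)))" by (rule WCh_wsum_flatten)
  finally show ?thesis by (simp add: wsum_append)
qed

lemma Seq_wsum: "eqv star (Seq (wsum xs) f) (wsum (map (\<lambda>(r, e). (r, Seq e f)) xs))"
proof (induction xs rule: wsum.induct)
  case 1
  show ?case by (simp, rule eqv.C2)
next
  case (2 p e xs)
  have "eqv star (Seq (wsum ((p, e) # xs)) f) (WCh (Seq e f) p 1 (Seq (wsum xs) f))"
    by (simp, rule eqv.S4)
  also have "eqv star \<dots> (wsum (map (\<lambda>(r, e). (r, Seq e f)) ((p, e) # xs)))"
    by (simp, rule eqv_WCh_right, rule 2)
  finally show ?case .
qed

lemma wsum_of_wsums:
  "eqv star (wsum (map (\<lambda>(r, xs). (r, wsum xs)) xss)) (wsum (concat (map (\<lambda>(r, xs). scale r xs) xss)))"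
proof (induction xss)
  case Nil
  show ?case by (simp add: eqv.refl)
next
  case (Cons rxs xss)
  obtain r xs where rxs: "rxs = (r, xs)" by force
  let ?rest = "wsum (concat (map (\<lambda>(r, xs). scale r xs) xss))"
  have "eqv star (wsum (map (\<lambda>(r, xs). (r, wsum xs)) (rxs # xss))) (WCh (wsum xs) r 1 ?rest)"
    by (simp add: rxs, rule eqv_WCh_right, rule Cons)
  also have "eqv star \<dots> (wsum_onto (scale r xs) ?rest)" by (rule WCh_wsum_flatten)
  finally show ?case by (simp add: rxs wsum_append)
qed

lemma guarded_wsum_cong:
  assumes "\<And>r x. (r, x) \<in> set xs \<Longrightarrow> eqv star (Seq (Test b) (f x)) (Seq (Test b) (g x))"
  shows "eqv star (Seq (Test b) (wsum (map (\<lambda>(r, x). (r, f x)) xs)))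
    (Seq (Test b) (wsum (map (\<lambda>(r, x). (r, g x)) xs)))"
  using assms
proof (induction xs)
  case Nil
  show ?case by (simp add: eqv.refl)
next
  case (Cons rx xs)
  obtain r x where rx: "rx = (r, x)" by force
  show ?case
    using Cons.prems by (simp add: rx, intro guarded_WCh Cons.IH) (auto simp: rx)
qed

lemma wsum_cong:
  assumes "\<And>r x. (r, x) \<in> set xs \<Longrightarrow> eqv star (f x) (g x)"
  shows "eqv star (wsum (map (\<lambda>(r, x). (r, f x)) xs)) (wsum (map (\<lambda>(r, x). (r, g x)) xs))"
proof -
  have "eqv star (Seq (Test BOne) (wsum (map (\<lambda>(r, x). (r, f x)) xs)))
      (Seq (Test BOne) (wsum (map (\<lambda>(r, x). (r, g x)) xs)))"
    using assms by (intro guarded_wsum_cong eqv_Seq_right)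
  then show ?thesis by (meson eqv.S1a eqv.sym eqv.trans)
qed

definition wt :: "('s::wsemiring \<times> 'a) list \<Rightarrow> 'a \<Rightarrow> 's" where
  "wt xs x = sum_list (map fst (filter (\<lambda>rx. snd rx = x) xs))"

lemma wt_simps [simp]:
  "wt [] x = 0"
  "wt ((r, y) # xs) x = (if y = x then r + wt xs x else wt xs x)"
  "wt (xs @ ys) x = wt xs x + wt ys x"
  by (auto simp: wt_def)

definition canon :: "'a list \<Rightarrow> ('a \<Rightarrow> 's) \<Rightarrow> ('s \<times> 'a) list" where
  "canon xs w = map (\<lambda>x. (w x, x)) xs"

lemma canon_simps [simp]:
  "canon [] w = []"
  "canon (x # xs) w = (w x, x) # canon xs w"
  by (simp_all add: canon_def)

lemma WCh_1_into_canon: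
  assumes "distinct xs" and "e \<in> set xs"
  shows "eqv star (WCh e p 1 (wsum (canon xs w)))
    (wsum (canon xs (\<lambda>x. if x = e then p + w x else w x)))"
  using assms
proof (induction xs)
  case Nil
  then show ?case by simp
next
  case (Cons x xs)
  show ?case
  proof (cases "x = e")
    case True
    with Cons.prems have "canon xs (\<lambda>x. if x = e then p + w x else w x) = canon xs w"
      unfolding canon_def by (intro map_cong) auto
    with True show ?thesis by (simp add: WCh_1_merge)
  next
    case False
    have "eqv star (WCh e p 1 (wsum (canon (x # xs) w))) (WCh x (w x) 1 (WCh e p 1 (wsum (canon xs w))))"
      by (simp add: WCh_1_swap)
    also have "eqv star \<dots> (WCh x (w x) 1 (wsum (canon xs (\<lambda>x. if x = e then p + w x else w x))))"
      using Cons False by (intro eqv_WCh_right Cons.IH) auto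
    finally show ?thesis using False by simp
  qed
qed

lemma odot0_eqv_canon_0: "eqv star (odot 0) (wsum (canon xs (\<lambda>_. 0)))"
proof (induction xs)
  case Nil
  show ?case by (simp add: eqv.refl)
next
  case (Cons x xs)
  have "eqv star (wsum (canon xs (\<lambda>_. 0))) (wsum (canon (x # xs) (\<lambda>_. 0)))"
    by (simp, rule eqv.sym, rule WCh_0_1)
  with Cons show ?case by (rule eqv.trans)
qed

lemma wsum_eqv_canon:
  assumes "distinct xs" and "snd ` set ys \<subseteq> set xs"
  shows "eqv star (wsum ys) (wsum (canon xs (wt ys)))"
  using assms(2)
proof (induction ys rule: wsum.induct)
  case 1
  show ?case using odot0_eqv_canon_0[of star xs] by (simp add: canon_def)
next
  case (2 p e ys)
  have "eqv star (wsum ((p, e) # ys)) (WCh e p 1 (wsum (canon xs (wt ys))))"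
    using 2 by (simp add: eqv_WCh_right)
  also have "eqv star \<dots> (wsum (canon xs (\<lambda>x. if x = e then p + wt ys x else wt ys x)))"
    using 2 assms(1) by (intro WCh_1_into_canon) auto
  also have "(\<lambda>x. if x = e then p + wt ys x else wt ys x) = wt ((p, e) # ys)"
    by auto
  finally show ?case .
qed

lemma wsum_eqv_if_wt_eq:
  assumes "\<And>e. wt xs e = wt ys e"
  shows "eqv star (wsum xs) (wsum ys)"
proof -
  let ?es = "remdups (map snd (xs @ ys))"
  have "eqv star (wsum xs) (wsum (canon ?es (wt xs)))" by (rule wsum_eqv_canon) auto
  also have "wt xs = wt ys" using assms by (rule ext)
  also have "eqv star (wsum (canon ?es (wt ys))) (wsum ys)" by (rule eqv.sym, rule wsum_eqv_canon) auto
  finally show ?thesis .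
qed

section \<open>Derivatives as weighted lists\<close>

text \<open>\<open>deriv_list\<close> computes \<open>\<partial>(e)\<^sub>\<alpha>\<close> as a list of weighted observations; reading the
  observations back as expressions turns it into the weighted sum \<open>deriv_exp\<close> that the
  fundamental theorem equates with \<open>e\<close> under \<open>\<alpha>\<close>.\<close>

definition obs_exp :: "('p, 'v, ('t, 'p, 'v, 's) exp) obs \<Rightarrow> ('t, 'p, 'v, 's) exp" where
  "obs_exp ob = (case ob of Acc \<Rightarrow> Test BOne | Rej \<Rightarrow> Test BZero | Out v \<Rightarrow> Ret v
     | Tr p e \<Rightarrow> Seq (Act p) e)"

lemma obs_exp_simps [simp]:
  "obs_exp Acc = Test BOne" "obs_exp Rej = Test BZero" "obs_exp (Out v) = Ret v"
  "obs_exp (Tr p e) = Seq (Act p) e"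
  by (simp_all add: obs_exp_def)

lemma obs_exp_inject: "obs_exp x = obs_exp y \<longleftrightarrow> x = y"
  by (cases x; cases y; simp)

definition obs_exps ::
  "('s \<times> ('p, 'v, ('t, 'p, 'v, 's) exp) obs) list \<Rightarrow> ('s \<times> ('t, 'p, 'v, 's) exp) list" where
  "obs_exps xs = map (\<lambda>(r, ob). (r, obs_exp ob)) xs"

lemma obs_exps_simps [simp]:
  "obs_exps [] = []" "obs_exps ((r, ob) # xs) = (r, obs_exp ob) # obs_exps xs"
  "obs_exps (xs @ ys) = obs_exps xs @ obs_exps ys" "obs_exps (scale r xs) = scale r (obs_exps xs)"
  "obs_exps (concat xss) = concat (map obs_exps xss)"
  by (auto simp: obs_exps_def[abs_def] scale_def map_concat)

lemma map_obs_exps: "map (\<lambda>(r, e). (r, g e)) (obs_exps xs) = map (\<lambda>(r, ob). (r, g (obs_exp ob))) xs"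
  by (auto simp: obs_exps_def)

definition obs_seq :: "('t, 'p, 'v, 's) exp \<Rightarrow> ('p, 'v, ('t, 'p, 'v, 's) exp) obs
    \<Rightarrow> ('p, 'v, ('t, 'p, 'v, 's) exp) obs" where
  "obs_seq f ob = (case ob of Tr p e \<Rightarrow> Tr p (Seq e f) | _ \<Rightarrow> ob)"

lemma obs_seq_simps [simp]:
  "obs_seq f Acc = Acc" "obs_seq f Rej = Rej" "obs_seq f (Out v) = Out v"
  "obs_seq f (Tr p e) = Tr p (Seq e f)"
  by (simp_all add: obs_seq_def)

definition seq_obs :: "('t, 'p, 'v, 's::wsemiring) exp \<Rightarrow> ('s \<times> ('p, 'v, ('t, 'p, 'v, 's) exp) obs) list
    \<Rightarrow> ('p, 'v, ('t, 'p, 'v, 's) exp) obs \<Rightarrow> ('s \<times> ('p, 'v, ('t, 'p, 'v, 's) exp) obs) list" where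
  "seq_obs f df ob = (case ob of Acc \<Rightarrow> df | _ \<Rightarrow> [(1, obs_seq f ob)])"

primrec deriv_list :: "('s::wsemiring \<Rightarrow> 's) \<Rightarrow> ('t, 'p, 'v, 's) exp \<Rightarrow> 't set
    \<Rightarrow> ('s \<times> ('p, 'v, ('t, 'p, 'v, 's) exp) obs) list" where
  "deriv_list star (Act p) \<alpha> = [(1, Tr p (Test BOne))]"
| "deriv_list star (Test b) \<alpha> = [(1, if beval \<alpha> b then Acc else Rej)]"
| "deriv_list star (GCh e b f) \<alpha> = (if beval \<alpha> b then deriv_list star e \<alpha> else deriv_list star f \<alpha>)"
| "deriv_list star (Seq e f) \<alpha> =
    concat (map (\<lambda>(r, ob). scale r (seq_obs f (deriv_list star f \<alpha>) ob)) (deriv_list star e \<alpha>))"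
| "deriv_list star (Loop e b) \<alpha> =
    (if beval \<alpha> b
     then scale (star (wt (deriv_list star e \<alpha>) Acc))
       (map (\<lambda>(r, ob). (r, obs_seq (Loop e b) ob)) (filter (\<lambda>x. snd x \<noteq> Acc) (deriv_list star e \<alpha>)))
     else [(1, Acc)])"
| "deriv_list star (Ret v) \<alpha> = [(1, Out v)]"
| "deriv_list star (WCh e r s f) \<alpha> = scale s (deriv_list star f \<alpha>) @ scale r (deriv_list star e \<alpha>)"

abbreviation deriv_exp :: "('s::wsemiring \<Rightarrow> 's) \<Rightarrow> ('t, 'p, 'v, 's) exp \<Rightarrow> 't set \<Rightarrow> ('t, 'p, 'v, 's) exp" where
  "deriv_exp star e \<alpha> \<equiv> wsum (obs_exps (deriv_list star e \<alpha>))"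

lemma wt_scale [simp]: "wt (scale r xs) x = r * wt xs x"
  by (induction xs) (auto simp: distrib_left)

lemma wt_concat: "wt (concat xss) x = sum_list (map (\<lambda>xs. wt xs x) xss)"
  by (induction xss) auto

lemma wt_nonzero_in_set: "wt xs x \<noteq> 0 \<Longrightarrow> x \<in> snd ` set xs"
  by (induction xs) (auto split: if_splits)

lemma wt_filter_neq: "wt (filter (\<lambda>rx. snd rx \<noteq> y) xs) x = (if x = y then 0 else wt xs x)"
  by (induction xs) auto

lemma wt_map_snd_inj:
  "(\<And>y. \<phi> y = x \<longleftrightarrow> y = x') \<Longrightarrow> wt (map (\<lambda>(r, y). (r, \<phi> y)) xs) x = wt xs x'"
  by (induction xs) auto

lemma wt_map_snd_miss: "(\<And>y. \<phi> y \<noteq> x) \<Longrightarrow> wt (map (\<lambda>(r, y). (r, \<phi> y)) xs) x = 0"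
  by (induction xs) auto

lemma sum_list_eq_sum_wt:
  fixes h :: "'a \<Rightarrow> 's::wsemiring"
  shows "sum_list (map (\<lambda>(r, x). r * h x) xs) = (\<Sum>x\<in>{x. wt xs x \<noteq> 0}. wt xs x * h x)"
proof -
  have grouped: "finite S \<Longrightarrow> snd ` set xs \<subseteq> S \<Longrightarrow>
      sum_list (map (\<lambda>(r, x). r * h x) xs) = (\<Sum>x\<in>S. wt xs x * h x)" for S
  proof (induction xs)
    case Nil
    then show ?case by simp
  next
    case (Cons ry xs)
    obtain r y where ry: "ry = (r, y)" by force
    have "(\<Sum>x\<in>S. wt (ry # xs) x * h x) = (\<Sum>x\<in>S. (if y = x then r * h x else 0) + wt xs x * h x)"
      by (rule sum.cong) (auto simp: ry distrib_right)
    also have "\<dots> = r * h y + (\<Sum>x\<in>S. wt xs x * h x)"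
      using Cons.prems by (simp add: sum.distrib sum.delta ry)
    finally show ?case using Cons by (simp add: ry)
  qed
  have "sum_list (map (\<lambda>(r, x). r * h x) xs) = (\<Sum>x\<in>snd ` set xs. wt xs x * h x)"
    by (rule grouped) auto
  also have "\<dots> = (\<Sum>x\<in>{x. wt xs x \<noteq> 0}. wt xs x * h x)"
    by (rule sum.mono_neutral_right) (auto dest: wt_nonzero_in_set)
  finally show ?thesis .
qed

lemma dlt_eq: "dlt a b = (if b = a then 1 else 0)"
  by (simp add: dlt_def)

lemma deriv_Seq_eq_wt:
  assumes "deriv star e \<alpha> = wt (deriv_list star e \<alpha>)" and "deriv star f \<alpha> = wt (deriv_list star f \<alpha>)"
  shows "deriv star (Seq e f) \<alpha> = wt (deriv_list star (Seq e f) \<alpha>)"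
proof
  fix ob
  let ?de = "deriv_list star e \<alpha>"
  have "wt (deriv_list star (Seq e f) \<alpha>) ob
      = sum_list (map (\<lambda>(r, x). r * seq_cont (deriv star f \<alpha>) f x ob) ?de)"
    unfolding deriv_list.simps wt_concat map_map
    by (rule arg_cong[where f=sum_list], rule map_cong, simp)
      (auto simp: seq_obs_def seq_cont_def assms(2) dlt_eq split: obs.splits)
  also have "\<dots> = (\<Sum>x\<in>{x. wt ?de x \<noteq> 0}. wt ?de x * seq_cont (deriv star f \<alpha>) f x ob)"
    by (rule sum_list_eq_sum_wt)
  finally show "deriv star (Seq e f) \<alpha> ob = wt (deriv_list star (Seq e f) \<alpha>) ob"
    by (simp add: assms(1))
qed

lemma deriv_Loop_eq_wt:
  assumes IH: "deriv star e \<alpha> = wt (deriv_list star e \<alpha>)"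
  shows "deriv star (Loop e b) \<alpha> = wt (deriv_list star (Loop e b) \<alpha>)"
proof
  fix ob
  show "deriv star (Loop e b) \<alpha> ob = wt (deriv_list star (Loop e b) \<alpha>) ob"
  proof (cases "beval \<alpha> b")
    case False
    then show ?thesis by (cases ob) (auto split: exp.splits)
  next
    case True
    let ?xs = "filter (\<lambda>x. snd x \<noteq> Acc) (deriv_list star e \<alpha>)"
    let ?\<phi> = "obs_seq (Loop e b)"
    have unfold: "wt (deriv_list star (Loop e b) \<alpha>) ob
        = star (wt (deriv_list star e \<alpha>) Acc) * wt (map (\<lambda>(r, x). (r, ?\<phi> x)) ?xs) ob"
      using True by simp
    show ?thesis
    proof (cases "\<exists>ob'. ?\<phi> ob' = ob")
      case True
      then obtain ob' where ob': "?\<phi> ob' = ob" by blast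
      have "wt (map (\<lambda>(r, x). (r, ?\<phi> x)) ?xs) ob = wt ?xs ob'"
        by (rule wt_map_snd_inj) (use ob' in \<open>auto simp: obs_seq_def split: obs.splits\<close>)
      with ob' unfold \<open>beval \<alpha> b\<close> show ?thesis
        by (cases ob') (auto simp: wt_filter_neq IH)
    next
      case False
      then obtain p g where ob: "ob = Tr p g" and g: "\<And>e'. g \<noteq> Seq e' (Loop e b)"
      proof (cases ob)
        case (Tr p g)
        with False have "g \<noteq> Seq e' (Loop e b)" for e'
          by (metis obs_seq_simps(4))
        with Tr that show ?thesis by blast
      qed (use False obs_seq_simps in metis)+
      have "wt (map (\<lambda>(r, x). (r, ?\<phi> x)) ?xs) ob = 0"
        by (rule wt_map_snd_miss) (use False in blast)
      with unfold \<open>beval \<alpha> b\<close> ob g show ?thesis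
        by (auto split: exp.splits)
    qed
  qed
qed

lemma deriv_eq_wt_deriv_list: "deriv star e \<alpha> = wt (deriv_list star e \<alpha>)"
proof (induction e arbitrary: \<alpha>)
  case (Seq e f)
  then show ?case by (rule deriv_Seq_eq_wt)
next
  case (Loop e b)
  then show ?case by (rule deriv_Loop_eq_wt)
next
  case (WCh e r s f)
  then show ?case by (auto simp: add.commute)
qed (auto simp: dlt_eq)

section \<open>The fundamental theorem\<close>

lemma Seq_obs_exp: "ob \<noteq> Acc \<Longrightarrow> eqv star (Seq (obs_exp ob) f) (obs_exp (obs_seq f ob))"
  by (cases ob) (auto intro: eqv.S3 eqv.S6 eqv.S2)

lemma guarded_expansion_Seq:
  assumes IH1: "eqv star (Seq (Test c) e) (Seq (Test c) (deriv_exp star e \<alpha>))"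
    and IH2: "eqv star (Seq (Test c) f) (Seq (Test c) (deriv_exp star f \<alpha>))"
  shows "eqv star (Seq (Test c) (Seq e f)) (Seq (Test c) (deriv_exp star (Seq e f) \<alpha>))"
proof -
  let ?de = "deriv_list star e \<alpha>" and ?df = "deriv_list star f \<alpha>"
  let ?blocks = "map (\<lambda>(r, ob). (r, obs_exps (seq_obs f ?df ob))) ?de"
  have block: "eqv star (Seq (Test c) (Seq (obs_exp ob) f)) (Seq (Test c) (wsum (obs_exps (seq_obs f ?df ob))))"
    for ob
  proof (cases "ob = Acc")
    case True
    have "eqv star (Seq (Test c) (Seq (obs_exp ob) f)) (Seq (Test c) f)"
      using True by (simp add: eqv_Seq_right eqv.S1a)
    also have "eqv star \<dots> (Seq (Test c) (wsum (obs_exps (seq_obs f ?df ob))))"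
      using True IH2 by (simp add: seq_obs_def)
    finally show ?thesis .
  next
    case False
    then have "seq_obs f ?df ob = [(1, obs_seq f ob)]" by (cases ob) (auto simp: seq_obs_def)
    then show ?thesis
      using eqv.trans[OF Seq_obs_exp[OF False] eqv.sym[OF wsum_single]] by (simp add: eqv_Seq_right)
  qed
  have "eqv star (Seq (Test c) (Seq e f)) (Seq (Test c) (Seq (wsum (obs_exps ?de)) f))"
    by (rule guarded_Seq_left, rule IH1)
  also have "eqv star \<dots> (Seq (Test c) (wsum (map (\<lambda>(r, ob). (r, Seq (obs_exp ob) f)) ?de)))"
    using Seq_wsum[of star "obs_exps ?de" f] unfolding map_obs_exps by (rule eqv_Seq_right)
  also have "eqv star \<dots> (Seq (Test c) (wsum (map (\<lambda>(r, ob). (r, wsum (obs_exps (seq_obs f ?df ob)))) ?de)))"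
    by (rule guarded_wsum_cong, rule block)
  also have "map (\<lambda>(r, ob). (r, wsum (obs_exps (seq_obs f ?df ob)))) ?de = map (\<lambda>(r, xs). (r, wsum xs)) ?blocks"
    by auto
  also have "eqv star (Seq (Test c) (wsum (map (\<lambda>(r, xs). (r, wsum xs)) ?blocks)))
      (Seq (Test c) (wsum (concat (map (\<lambda>(r, xs). scale r xs) ?blocks))))"
    by (rule eqv_Seq_right, rule wsum_of_wsums)
  finally show ?thesis
    by (simp add: map_map comp_def case_prod_beta)
qed

lemma wsum_obs_exps_split_Acc:
  fixes xs :: "('s::wsemiring \<times> ('p, 'v, ('t, 'p, 'v, 's) exp) obs) list"
  shows "eqv star (wsum (obs_exps xs))
    (WCh (wsum (obs_exps (filter (\<lambda>x. snd x \<noteq> Acc) xs))) 1 (wt xs Acc) (Test BOne))"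
proof -
  let ?rest = "filter (\<lambda>x. snd x \<noteq> Acc) xs"
  have "eqv star (wsum (obs_exps xs)) (wsum ((wt xs Acc, Test BOne) # obs_exps ?rest))"
  proof (rule wsum_eqv_if_wt_eq)
    fix x
    have split: "wt (obs_exps ys) x = wt (obs_exps (filter (\<lambda>x. snd x = Acc) ys)) x
        + wt (obs_exps (filter (\<lambda>x. snd x \<noteq> Acc) ys)) x"
      for ys :: "('s \<times> ('p, 'v, ('t, 'p, 'v, 's) exp) obs) list"
      by (induction ys) (auto simp: add.assoc add.left_commute)
    have acc: "wt (obs_exps (filter (\<lambda>x. snd x = Acc) ys)) x = (if x = Test BOne then wt ys Acc else 0)"
      for ys :: "('s \<times> ('p, 'v, ('t, 'p, 'v, 's) exp) obs) list"
      by (induction ys) auto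
    show "wt (obs_exps xs) x = wt ((wt xs Acc, Test BOne) # obs_exps ?rest) x"
      by (simp add: split[of xs] acc)
  qed
  also have "eqv star \<dots> (WCh (wsum (obs_exps ?rest)) 1 (wt xs Acc) (Test BOne))"
    by (simp, rule eqv.W2)
  finally show ?thesis .
qed

lemma guarded_atom_Test:
  "eqv star (Seq (Test (atom_test (\<alpha>::'t::finite set))) (Test b))
    (Seq (Test (atom_test \<alpha>)) (Test (if beval \<alpha> b then BOne else BZero)))"
proof -
  have "eqv star (Seq (Test (atom_test \<alpha>)) (Test b)) (Test (BAnd (atom_test \<alpha>) b))" by (rule eqv.S7)
  also have "eqv star \<dots> (Test (BAnd (atom_test \<alpha>) (if beval \<alpha> b then BOne else BZero)))"
    by (rule eqv.BA) (auto simp: beq_def beval_atom_test)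
  also have "eqv star \<dots> (Seq (Test (atom_test \<alpha>)) (Test (if beval \<alpha> b then BOne else BZero)))"
    by (rule eqv.sym, rule eqv.S7)
  finally show ?thesis .
qed

lemma guarded_atom_GCh:
  "eqv star (Seq (Test (atom_test (\<alpha>::'t::finite set))) (GCh e b f))
    (Seq (Test (atom_test \<alpha>)) (if beval \<alpha> b then e else f))"
  by (cases "beval \<alpha> b") (auto intro: guarded_GCh_left guarded_GCh_right simp: beval_atom_test)

lemma guarded_expansion_Loop:
  fixes e :: "('t::finite, 'p, 'v, 's::wsemiring) exp"
  assumes IH: "eqv star (Seq (Test (atom_test \<alpha>)) e) (Seq (Test (atom_test \<alpha>)) (deriv_exp star e \<alpha>))"
  shows "eqv star (Seq (Test (atom_test \<alpha>)) (Loop e b))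
    (Seq (Test (atom_test \<alpha>)) (deriv_exp star (Loop e b) \<alpha>))"
proof (cases "beval \<alpha> b")
  case False
  let ?A = "Test (atom_test \<alpha>)"
  have "eqv star (Seq ?A (Loop e b)) (Seq ?A (GCh (Seq e (Loop e b)) b (Test BOne)))"
    by (rule eqv_Seq_right, rule eqv.L1)
  also have "eqv star \<dots> (Seq ?A (Test BOne))"
    using guarded_atom_GCh[of star \<alpha> "Seq e (Loop e b)" b "Test BOne"] False by simp
  also have "eqv star \<dots> (Seq ?A (wsum [(1, Test BOne)]))"
    by (rule eqv_Seq_right, rule eqv.sym, rule wsum_single)
  also have "wsum [(1, Test BOne)] = deriv_exp star (Loop e b) \<alpha>"
    using False by simp
  finally show ?thesis .
next
  case True
  let ?A = "Test (atom_test \<alpha>)"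
  let ?de = "deriv_list star e \<alpha>"
  let ?a = "wt ?de Acc"
  let ?rest = "filter (\<lambda>x. snd x \<noteq> Acc) ?de"
  let ?F = "wsum (obs_exps ?rest)"
  let ?K = "Loop e b"
  have "eqv star (Seq ?A e) (Seq ?A (WCh ?F 1 ?a (Test BOne)))"
    by (rule eqv.trans[OF IH eqv_Seq_right[OF wsum_obs_exps_split_Acc]])
  then have "eqv star e (GCh (WCh ?F 1 ?a (Test BOne)) (atom_test \<alpha>) e)"
    by (rule GCh_intro_guarded)
  then have "eqv star (Seq ?A ?K) (Seq ?A (GCh (Seq (odot (star ?a * 1)) (Seq ?F ?K)) b (Test BOne)))"
    by (rule eqv.L2)
  also have "eqv star \<dots> (Seq ?A (Seq (odot (star ?a)) (Seq ?F ?K)))"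
    using guarded_atom_GCh[of star \<alpha> _ b "Test BOne"] True by simp
  also have "eqv star \<dots> (Seq ?A (Seq (odot (star ?a)) (wsum (map (\<lambda>(r, ob). (r, Seq (obs_exp ob) ?K)) ?rest))))"
    using Seq_wsum[of star "obs_exps ?rest" ?K] unfolding map_obs_exps by (intro eqv_Seq_right)
  also have "eqv star \<dots> (Seq ?A (Seq (odot (star ?a)) (wsum (map (\<lambda>(r, ob). (r, obs_exp (obs_seq ?K ob))) ?rest))))"
    by (intro eqv_Seq_right wsum_cong Seq_obs_exp) auto
  also have "eqv star \<dots> (Seq ?A (wsum (scale (star ?a) (map (\<lambda>(r, ob). (r, obs_exp (obs_seq ?K ob))) ?rest))))"
    by (rule eqv_Seq_right, rule odot_Seq_wsum)
  finally show ?thesis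
    using True by (simp add: obs_exps_def scale_def map_map comp_def case_prod_beta)
qed

lemma guarded_deriv_expansion:
  fixes e :: "('t::finite, 'p, 'v, 's::wsemiring) exp"
  shows "eqv star (Seq (Test (atom_test \<alpha>)) e) (Seq (Test (atom_test \<alpha>)) (deriv_exp star e \<alpha>))"
proof (induction e arbitrary: \<alpha>)
  case (Act p)
  show ?case
    unfolding deriv_list.simps obs_exps_simps obs_exp_simps
    by (intro eqv_Seq_right eqv.trans[OF eqv.S1b eqv.sym[OF wsum_single]])
next
  case (Test b)
  show ?case
    by (rule eqv.trans[OF guarded_atom_Test], rule eqv_Seq_right, rule eqv.sym)
      (simp add: wsum_single[simplified])
next
  case (GCh e b f)
  show ?case
    by (rule eqv.trans[OF guarded_atom_GCh]) (simp add: GCh.IH)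
next
  case (WCh e r s f)
  have "eqv star (Seq (Test (atom_test \<alpha>)) (WCh e r s f))
      (Seq (Test (atom_test \<alpha>)) (WCh (deriv_exp star e \<alpha>) r s (deriv_exp star f \<alpha>)))"
    by (rule guarded_WCh, rule WCh.IH, rule WCh.IH)
  also have "eqv star \<dots> (Seq (Test (atom_test \<alpha>)) (deriv_exp star (WCh e r s f) \<alpha>))"
    by (simp, rule eqv_Seq_right, rule WCh_wsum)
  finally show ?case .
next
  case (Seq e f)
  then show ?case by (rule guarded_expansion_Seq)
next
  case (Loop e b)
  then show ?case by (rule guarded_expansion_Loop)
next
  case (Ret v)
  show ?case by (simp only: deriv_list.simps obs_exps_simps obs_exp_simps)
      (rule eqv_Seq_right, rule eqv.sym, rule wsum_single)
qed

theorem deriv_expansion: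
  fixes e :: "('t::finite, 'p, 'v, 's::wsemiring) exp"
  shows "eqv star e (gsum atoms_list (deriv_exp star e))"
  by (rule eqv_gsum_if_guarded, rule guarded_deriv_expansion)

section \<open>Derivatives stay in a finite set\<close>

primrec dcl :: "('t, 'p, 'v, 's) exp \<Rightarrow> ('t, 'p, 'v, 's) exp set" where
  "dcl (Act p) = {Act p, Test BOne}"
| "dcl (Test b) = {Test b}"
| "dcl (Ret v) = {Ret v}"
| "dcl (GCh e b f) = insert (GCh e b f) (dcl e \<union> dcl f)"
| "dcl (WCh e r s f) = insert (WCh e r s f) (dcl e \<union> dcl f)"
| "dcl (Seq e f) = insert (Seq e f) ((\<lambda>e'. Seq e' f) ` dcl e \<union> dcl f)"
| "dcl (Loop e b) = insert (Loop e b) ((\<lambda>e'. Seq e' (Loop e b)) ` dcl e)"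

lemma dcl_self: "e \<in> dcl e"
  by (cases e) auto

lemma finite_dcl: "finite (dcl e)"
  by (induction e) auto

lemma in_set_scaleD: "(r, x) \<in> set (scale c xs) \<Longrightarrow> \<exists>r'. (r', x) \<in> set xs"
  by (auto simp: scale_def)

lemma Tr_in_deriv_list_Seq:
  assumes "(r, Tr p y) \<in> set (deriv_list star (Seq e f) \<alpha>)"
  shows "(\<exists>y' r'. y = Seq y' f \<and> (r', Tr p y') \<in> set (deriv_list star e \<alpha>))
    \<or> (\<exists>r'. (r', Tr p y) \<in> set (deriv_list star f \<alpha>))"
proof -
  from assms obtain r0 ob where ob: "(r0, ob) \<in> set (deriv_list star e \<alpha>)"
    and "(r, Tr p y) \<in> set (scale r0 (seq_obs f (deriv_list star f \<alpha>) ob))"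
    by auto
  then obtain r' where "(r', Tr p y) \<in> set (seq_obs f (deriv_list star f \<alpha>) ob)"
    by (blast dest: in_set_scaleD)
  with ob show ?thesis by (cases ob) (auto simp: seq_obs_def)
qed

lemma Tr_in_deriv_list_Loop:
  "(r, Tr p y) \<in> set (deriv_list star (Loop e b) \<alpha>) \<Longrightarrow>
    \<exists>y' r'. y = Seq y' (Loop e b) \<and> (r', Tr p y') \<in> set (deriv_list star e \<alpha>)"
  by (auto simp: scale_def obs_seq_def split: if_splits obs.splits)

lemma Tr_in_deriv_list_dcl:
  "x \<in> dcl e \<Longrightarrow> (r, Tr p y) \<in> set (deriv_list star x \<alpha>) \<Longrightarrow> y \<in> dcl e"
proof (induction e arbitrary: x r p y \<alpha>)
  case (GCh e1 b e2)
  then show ?case using dcl_self[of e1] dcl_self[of e2] by (auto split: if_splits)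
next
  case (WCh e1 r1 s1 e2)
  then show ?case using dcl_self[of e1] dcl_self[of e2] by (fastforce dest: in_set_scaleD)
next
  case (Seq e1 e2)
  from Seq.prems(1) consider z where "z \<in> dcl e1" "x = Seq z e2" | "x \<in> dcl e2"
    using dcl_self[of e1] by auto
  then show ?case
  proof cases
    case 1
    from Tr_in_deriv_list_Seq[OF Seq.prems(2)[unfolded 1(2)]] show ?thesis
      using Seq.IH 1(1) dcl_self[of e2] by fastforce
  qed (use Seq in auto)
next
  case (Loop e1 b)
  have loop: "y' \<in> dcl (Loop e1 b)" if "(r', Tr p' y') \<in> set (deriv_list star (Loop e1 b) \<alpha>')"
    for r' p' y' \<alpha>'
    using Tr_in_deriv_list_Loop[OF that] Loop.IH dcl_self[of e1] by fastforce
  from Loop.prems(1) consider "x = Loop e1 b" | z where "z \<in> dcl e1" "x = Seq z (Loop e1 b)"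
    by auto
  then show ?case
  proof cases
    case 2
    from Tr_in_deriv_list_Seq[OF Loop.prems(2)[unfolded 2(2)]] show ?thesis
      using Loop.IH 2(1) loop by fastforce
  qed (use loop Loop.prems(2) in auto)
qed (auto split: if_splits)

lemma deriv_Tr_nonzero_dcl:
  assumes "x \<in> dcl e" and "deriv star x \<alpha> (Tr p y) \<noteq> 0"
  shows "y \<in> dcl e"
proof -
  from assms(2) have "Tr p y \<in> snd ` set (deriv_list star x \<alpha>)"
    by (simp add: deriv_eq_wt_deriv_list wt_nonzero_in_set)
  with assms(1) show ?thesis by (auto intro: Tr_in_deriv_list_dcl)
qed

section \<open>A bisimulation yields a Salomaa system solved by both projections\<close>

lemma sum_eq_0_positive:
  assumes "positive_sr TYPE('s::wsemiring)" and "finite A"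
    and "sum (\<nu> :: 'a \<Rightarrow> 's) A = 0" and "x \<in> A"
  shows "\<nu> x = 0"
  using assms(2-)
proof (induction A rule: finite_induct)
  case (insert a A)
  then have "\<nu> a + sum \<nu> A = 0" by simp
  with assms(1) have "\<nu> a = 0 \<and> sum \<nu> A = 0" unfolding positive_sr_def by blast
  with insert show ?case by auto
qed simp

lemma msum_nonzero:
  assumes "positive_sr TYPE('s::wsemiring)" and "fin_supp (\<nu> :: 'a \<Rightarrow> 's)"
    and "x \<in> A" and "\<nu> x \<noteq> 0"
  shows "msum \<nu> A \<noteq> 0"
proof
  assume "msum \<nu> A = 0"
  moreover have "finite {x \<in> A. \<nu> x \<noteq> 0}"
    using assms(2) unfolding fin_supp_def by (rule finite_subset[rotated]) auto
  ultimately have "\<nu> x = 0"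
    using assms(1,3,4) unfolding msum_def by (blast intro: sum_eq_0_positive)
  with assms(4) show False ..
qed

lemma sum_nonzero_eq: "sum \<nu> {x. x = a \<and> \<nu> x \<noteq> 0} = (\<nu> a :: 's::wsemiring)"
proof -
  have "{x. x = a \<and> \<nu> x \<noteq> 0} = (if \<nu> a = 0 then {} else {a})" by auto
  then show ?thesis by simp
qed

lemma map_obs_id_id_eq_iff [simp]:
  "map_obs id id g x = Acc \<longleftrightarrow> x = Acc"
  "map_obs id id g x = Rej \<longleftrightarrow> x = Rej"
  "map_obs id id g x = Out v \<longleftrightarrow> x = Out v"
  "map_obs id id g x = Tr p y \<longleftrightarrow> (\<exists>x'. x = Tr p x' \<and> g x' = y)"
  by (cases x; auto)+

locale deriv_bisim =
  fixes star :: "'s::wsemiring \<Rightarrow> 's"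
    and R :: "(('t::finite, 'p, 'v, 's) exp \<times> ('t, 'p, 'v, 's) exp) set"
    and \<rho> :: "('t, 'p, 'v, 's) exp \<times> ('t, 'p, 'v, 's) exp \<Rightarrow> 't set
      \<Rightarrow> ('p, 'v, ('t, 'p, 'v, 's) exp \<times> ('t, 'p, 'v, 's) exp) obs \<Rightarrow> 's"
  assumes fin_supp: "r \<in> R \<Longrightarrow> fin_supp (\<rho> r \<alpha>)"
    and Tr_closed: "r \<in> R \<Longrightarrow> \<rho> r \<alpha> (Tr p r') \<noteq> 0 \<Longrightarrow> r' \<in> R"
    and hom_fst: "is_hom R \<rho> (deriv star) fst"
    and hom_snd: "is_hom R \<rho> (deriv star) snd"

lemma is_bisim_imp_deriv_bisim: "is_bisim star R \<Longrightarrow> \<exists>\<rho>. deriv_bisim star R \<rho>"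
  unfolding is_bisim_def deriv_bisim_def by blast

context deriv_bisim
begin

lemma deriv_image_Tr_nonzero:
  assumes "positive_sr TYPE('s)" and hom: "is_hom R \<rho> (deriv star) \<pi>"
    and r: "r \<in> R" and nz: "\<rho> r \<alpha> (Tr p r') \<noteq> 0"
  shows "deriv star (\<pi> r) \<alpha> (Tr p (\<pi> r')) \<noteq> 0"
proof -
  have "Tr p r' \<in> {Tr p x' | x'. x' \<in> R \<and> \<pi> x' = \<pi> r'}"
    using Tr_closed[OF r nz] by (intro CollectI exI[of _ r']) simp
  then have "msum (\<rho> r \<alpha>) {Tr p x' | x'. x' \<in> R \<and> \<pi> x' = \<pi> r'} \<noteq> 0"
    by (rule msum_nonzero[OF assms(1) fin_supp[OF r] _ nz])
  with hom r show ?thesis by (simp add: is_hom_def)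
qed

lemma dcl_part_closed:
  assumes "positive_sr TYPE('s)" and r: "r \<in> R \<inter> dcl e \<times> dcl f"
    and nz: "\<rho> r \<alpha> (Tr p r') \<noteq> 0"
  shows "r' \<in> R \<inter> dcl e \<times> dcl f"
proof -
  have "fst r' \<in> dcl e"
    using deriv_image_Tr_nonzero[OF assms(1) hom_fst _ nz] r by (auto intro: deriv_Tr_nonzero_dcl)
  moreover have "snd r' \<in> dcl f"
    using deriv_image_Tr_nonzero[OF assms(1) hom_snd _ nz] r by (auto intro: deriv_Tr_nonzero_dcl)
  moreover have "r' \<in> R"
    using Tr_closed nz r by blast
  ultimately show ?thesis by (cases r') auto
qed

lemma deriv_image_eq_sum:
  assumes hom: "is_hom R \<rho> (deriv star) \<pi>" and r: "r \<in> R"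
  shows "deriv star (\<pi> r) \<alpha> ob = sum (\<rho> r \<alpha>) {x. \<rho> r \<alpha> x \<noteq> 0 \<and> map_obs id id \<pi> x = ob}"
proof (cases ob)
  case (Tr p y)
  have "{x. \<rho> r \<alpha> x \<noteq> 0 \<and> map_obs id id \<pi> x = ob} = {x \<in> {Tr p x' | x'. x' \<in> R \<and> \<pi> x' = y}. \<rho> r \<alpha> x \<noteq> 0}"
    using Tr_closed[OF r] by (auto simp: Tr)
  with hom r show ?thesis by (simp add: is_hom_def msum_def Tr)
qed (use hom r in \<open>simp_all add: is_hom_def sum_nonzero_eq\<close>)

end

definition list_pos :: "'a list \<Rightarrow> 'a \<Rightarrow> nat" where
  "list_pos xs = inv_into {..<length xs} ((!) xs)"

lemma list_pos: "x \<in> set xs \<Longrightarrow> list_pos xs x < length xs \<and> xs ! list_pos xs x = x"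
proof -
  assume "x \<in> set xs"
  then have "x \<in> (!) xs ` {..<length xs}" by (auto simp: in_set_conv_nth)
  then show ?thesis
    using inv_into_into[of x "(!) xs" "{..<length xs}"] f_inv_into_f[of x "(!) xs"]
    unfolding list_pos_def by simp
qed

definition supp_list :: "('a \<Rightarrow> 's::wsemiring) \<Rightarrow> 'a list" where
  "supp_list \<nu> = (SOME xs. distinct xs \<and> set xs = {x. \<nu> x \<noteq> 0})"

lemma supp_list: "fin_supp \<nu> \<Longrightarrow> distinct (supp_list \<nu>) \<and> set (supp_list \<nu>) = {x. \<nu> x \<noteq> 0}"
  unfolding supp_list_def fin_supp_def by (rule someI_ex) (use finite_distinct_list in blast)

text \<open>The system has one indeterminate \<open>i\<close> per listed pair \<open>xs ! i\<close>; a transition of weight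
  \<open>w\<close> with action \<open>p\<close> to the pair \<open>r'\<close> becomes the summand \<open>w \<cdot> p x\<^sub>i\<close> with \<open>xs ! i = r'\<close>.\<close>

definition obs_summand :: "'x list \<Rightarrow> ('p, 'v, 'x) obs \<Rightarrow> ('t, 'p, 'v, 's) sumd" where
  "obs_summand xs ob = (case ob of Acc \<Rightarrow> SExp (Test BOne) | Rej \<Rightarrow> SExp (Test BZero)
     | Out v \<Rightarrow> SExp (Ret v) | Tr p r \<Rightarrow> SVar (Act p) (list_pos xs r))"

definition bisim_system :: "('x \<Rightarrow> 't set \<Rightarrow> ('p, 'v, 'x) obs \<Rightarrow> 's::wsemiring) \<Rightarrow> 'x list
    \<Rightarrow> nat \<Rightarrow> ('t, 'p, 'v, 's) sterm" where
  "bisim_system \<rho> xs i \<alpha> = (if i < length xs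
     then map (\<lambda>ob. (\<rho> (xs ! i) \<alpha> ob, obs_summand xs ob)) (supp_list (\<rho> (xs ! i) \<alpha>)) else [])"

lemma is_system_bisim_system:
  assumes fin: "\<And>r \<alpha>. r \<in> set xs \<Longrightarrow> fin_supp (\<rho> r \<alpha>)"
    and closed: "\<And>r \<alpha> p r'. r \<in> set xs \<Longrightarrow> \<rho> r \<alpha> (Tr p r') \<noteq> 0 \<Longrightarrow> r' \<in> set xs"
  shows "is_system {..<length xs} (bisim_system \<rho> xs)"
  unfolding is_system_def
proof (intro conjI ballI allI impI)
  fix i \<alpha> w g j
  assume i: "i \<in> {..<length xs}" and "(w, SVar g j) \<in> set (bisim_system \<rho> xs i \<alpha>)"
  then obtain ob where ob: "ob \<in> set (supp_list (\<rho> (xs ! i) \<alpha>))" and sv: "obs_summand xs ob = SVar g j"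
    by (auto simp: bisim_system_def)
  from sv obtain p r' where Tr: "ob = Tr p r'" and j: "j = list_pos xs r'"
    by (cases ob) (auto simp: obs_summand_def)
  have "xs ! i \<in> set xs" using i by simp
  moreover from this ob Tr have "\<rho> (xs ! i) \<alpha> (Tr p r') \<noteq> 0"
    using supp_list[OF fin] by blast
  ultimately have "r' \<in> set xs" by (rule closed)
  then show "j \<in> {..<length xs}" using list_pos[of r' xs] j by simp
qed simp

lemma salomaa_bisim_system: "salomaa X (bisim_system \<rho> xs)"
  unfolding salomaa_def
proof (intro ballI allI impI)
  fix i \<alpha> w g j \<beta>
  assume "(w, SVar g j) \<in> set (bisim_system \<rho> xs i \<alpha>)"
  then obtain ob where "obs_summand xs ob = SVar g j"
    by (auto simp: bisim_system_def split: if_splits)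
  then obtain p where "g = Act p" by (cases ob) (auto simp: obs_summand_def)
  then show "Eo g \<beta> = 0" by simp
qed

lemma wt_map_distinct:
  "distinct xs \<Longrightarrow> wt (map (\<lambda>x. (\<nu> x, \<mu> x)) xs) y = sum \<nu> {x \<in> set xs. \<mu> x = y}"
proof (induction xs)
  case (Cons x xs)
  then have "{x' \<in> set (x # xs). \<mu> x' = y}
      = (if \<mu> x = y then insert x {x' \<in> set xs. \<mu> x' = y} else {x' \<in> set xs. \<mu> x' = y})"
    by auto
  with Cons show ?case by simp
qed simp

lemma wt_obs_exps_cong:
  fixes xs ys :: "('s::wsemiring \<times> ('p, 'v, ('t, 'p, 'v, 's) exp) obs) list"
  assumes "\<And>ob. wt xs ob = wt ys ob"
  shows "wt (obs_exps xs) e = wt (obs_exps ys) e"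
proof (cases "\<exists>ob. e = obs_exp ob")
  case True
  then obtain ob where ob: "e = obs_exp ob" by blast
  have "wt (obs_exps zs) e = wt zs ob" for zs :: "('s \<times> ('p, 'v, ('t, 'p, 'v, 's) exp) obs) list"
    unfolding obs_exps_def ob by (rule wt_map_snd_inj) (simp add: obs_exp_inject)
  with assms show ?thesis by simp
next
  case False
  then have "wt (obs_exps zs) e = 0" for zs :: "('s \<times> ('p, 'v, ('t, 'p, 'v, 's) exp) obs) list"
    unfolding obs_exps_def by (intro wt_map_snd_miss) auto
  then show ?thesis by simp
qed

context deriv_bisim
begin

lemma hom_image_solves_bisim_system:
  assumes hom: "is_hom R \<rho> (deriv star) \<pi>"
    and closed: "\<And>r \<alpha> p r'. r \<in> set xs \<Longrightarrow> \<rho> r \<alpha> (Tr p r') \<noteq> 0 \<Longrightarrow> r' \<in> set xs"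
    and "set xs \<subseteq> R" and i: "i < length xs"
  shows "eqv star (\<pi> (xs ! i)) (hsharp (\<lambda>i. \<pi> (xs ! i)) (bisim_system \<rho> xs i))"
proof -
  let ?r = "xs ! i"
  have r: "?r \<in> set xs" "?r \<in> R" using i assms(3) by auto
  have supp: "distinct (supp_list (\<rho> ?r \<alpha>))" "set (supp_list (\<rho> ?r \<alpha>)) = {x. \<rho> ?r \<alpha> x \<noteq> 0}" for \<alpha>
    using supp_list fin_supp r(2) by blast+
  define image where "image \<alpha> = map (\<lambda>ob. (\<rho> ?r \<alpha> ob, map_obs id id \<pi> ob)) (supp_list (\<rho> ?r \<alpha>))"
    for \<alpha>
  have summand: "sumd_inst (\<lambda>i. \<pi> (xs ! i)) (obs_summand xs ob) = obs_exp (map_obs id id \<pi> ob)"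
    if "ob \<in> set (supp_list (\<rho> ?r \<alpha>))" for ob \<alpha>
  proof (cases ob)
    case (Tr p r')
    with that supp have "r' \<in> set xs" using closed[OF r(1)] by auto
    with Tr show ?thesis using list_pos[of r' xs] by (simp add: obs_summand_def)
  qed (simp_all add: obs_summand_def)
  have "hsharp (\<lambda>i. \<pi> (xs ! i)) (bisim_system \<rho> xs i) = gsum atoms_list (\<lambda>\<alpha>. wsum (obs_exps (image \<alpha>)))"
    unfolding hsharp_def bisim_system_def image_def obs_exps_def using i summand
    by (simp add: map_map comp_def cong: map_cong)
  moreover have "wt (image \<alpha>) = wt (deriv_list star (\<pi> ?r) \<alpha>)" for \<alpha>
  proof
    fix ob
    have "wt (image \<alpha>) ob = sum (\<rho> ?r \<alpha>) {x. \<rho> ?r \<alpha> x \<noteq> 0 \<and> map_obs id id \<pi> x = ob}"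
      unfolding image_def by (simp add: wt_map_distinct supp)
    also have "\<dots> = wt (deriv_list star (\<pi> ?r) \<alpha>) ob"
      by (simp add: deriv_image_eq_sum[OF hom r(2)] deriv_eq_wt_deriv_list[symmetric])
    finally show "wt (image \<alpha>) ob = wt (deriv_list star (\<pi> ?r) \<alpha>) ob" .
  qed
  then have "eqv star (gsum atoms_list (deriv_exp star (\<pi> ?r))) (gsum atoms_list (\<lambda>\<alpha>. wsum (obs_exps (image \<alpha>))))"
    by (intro gsum_cong_guarded eqv_Seq_right wsum_eqv_if_wt_eq wt_obs_exps_cong) simp
  ultimately show ?thesis
    using eqv.trans[OF deriv_expansion] by simp
qed

lemma deqv_if_in_closed_list:
  assumes closed: "\<And>r \<alpha> p r'. r \<in> set xs \<Longrightarrow> \<rho> r \<alpha> (Tr p r') \<noteq> 0 \<Longrightarrow> r' \<in> set xs"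
    and "set xs \<subseteq> R" and "(e, f) \<in> set xs"
  shows "deqv star e f"
proof -
  obtain i where i: "i < length xs" "xs ! i = (e, f)"
    using assms(3) by (auto simp: in_set_conv_nth)
  have "is_system {..<length xs} (bisim_system \<rho> xs)"
    using fin_supp assms(2) closed by (intro is_system_bisim_system) auto
  then have "deqv star (fst (xs ! i)) (snd (xs ! i))"
  proof (rule deqv.UA[OF _ salomaa_bisim_system, where f="\<lambda>i. fst (xs ! i)" and g="\<lambda>i. snd (xs ! i)"])
    show "\<forall>j. j \<in> {..<length xs} \<longrightarrow> deqv star (fst (xs ! j)) (hsharp (\<lambda>i. fst (xs ! i)) (bisim_system \<rho> xs j))"
      using hom_image_solves_bisim_system[OF hom_fst closed assms(2)] by (auto intro: deqv.base)
    show "\<forall>j. j \<in> {..<length xs} \<longrightarrow> deqv star (snd (xs ! j)) (hsharp (\<lambda>i. snd (xs ! i)) (bisim_system \<rho> xs j))"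
      using hom_image_solves_bisim_system[OF hom_snd closed assms(2)] by (auto intro: deqv.base)
  qed (use i in simp)
  with i show ?thesis by simp
qed

end

theorem mainTheorem11:
  fixes star :: "'s::wsemiring \<Rightarrow> 's"
    and e f :: "('t::finite, 'p, 'v, 's) exp"
  assumes "positive_sr TYPE('s)"
    and "refinement_sr TYPE('s)"
    and "conway_sr star"
    and "bisimilar star e f"
  shows "deqv star e f"
proof -
  obtain R \<rho> where bisim: "deriv_bisim star R \<rho>" and ef: "(e, f) \<in> R"
    using assms(4) is_bisim_imp_deriv_bisim unfolding bisimilar_def by blast
  interpret deriv_bisim star R \<rho> by (rule bisim)
  obtain xs where xs: "set xs = R \<inter> dcl e \<times> dcl f"
    using finite_list finite_dcl by (metis finite_Int finite_SigmaI)
  show ?thesis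
  proof (rule deqv_if_in_closed_list)
    show "r' \<in> set xs" if "r \<in> set xs" and "\<rho> r \<alpha> (Tr p r') \<noteq> 0" for r \<alpha> p r'
      using dcl_part_closed[OF assms(1)] that unfolding xs .
    show "set xs \<subseteq> R" "(e, f) \<in> set xs"
      using ef dcl_self unfolding xs by auto
  qed
qed

end
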